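(* In the setting of the context, $A$ and $B$ are separable $k$-algebras.
   Context: $k$ is a field; $C_R(S)=\{r\in R:rs=sr\ \forall s\in S\}$. $N\subseteq M$ is a strongly separable, irreducible extension of $k$-algebras: $C_M(N)=k1$ and there are an $N$-bimodule map $E:M\to N$ and $x_1,\dots,x_n,y_1,\dots,y_n\in M$ with $\sum_iE(mx_i)y_i=m=\sum_ix_iE(y_im)$ for all $m\in M$, $E(1)\neq0$, $\sum_ix_iy_i\neq0$; normalized so that $E(1)=1$, whence $\sum_ix_iy_i=\lambda^{-1}1$ with $0\neq\lambda\in k$. Basic construction: given $S\subseteq R$, an $S$-bimodule map $E_S:R\to S$ with $E_S(1)=1$ and $r_i,s_i\in R$ with $\sum_iE_S(rr_i)s_i=r=\sum_ir_iE_S(s_ir)$ and $\sum_ir_is_i=\lambda^{-1}1$, set $R_1=R\otimes_SR$ with product $(a\otimes b)(c\otimes d)=aE_S(bc)\otimes d$, unit $\sum_ir_i\otimes s_i$, $R\subseteq R_1$ via $r\mapsto\sum_irr_i\otimes s_i$, $e=1\otimes1$, $E_R:R_1\to R$, $a\otimes b\mapsto\lambda ab$; then $E_R$, $\lambda^{-1}r_i\otimes1$, $1\otimes s_i$ satisfy the same conditions with the same $\lambda$. From $(N\subseteq M,E)$ get $M_1,e_1,E_M$; from $(M\subseteq M_1,E_M)$ get $M_2,e_2,E_{M_1}$. Let $A=C_{M_1}(N)$, $B=C_{M_2}(M)$. Depth 2 is assumed: $M_1$ is free as right $M$-module with basis in $A$, $M_2$ free as right $M_1$-module with basis in $B$.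 A $k$-algebra $D$ is separable if the multiplication $D\otimes_kD\to D$ has a right inverse as a $D$-$D$-bimodule map. *)

theory Defs
  imports "HOL-Algebra.Module" "HOL-Algebra.Subrings"
begin

definition k_algebra :: "'k ring \<Rightarrow> ('k,'a) module \<Rightarrow> bool" where
  "k_algebra K D \<longleftrightarrow> field K \<and> ring D \<and> module K D \<and>
     (\<forall>c\<in>carrier K. \<forall>x\<in>carrier D. \<forall>y\<in>carrier D.
        c \<odot>\<^bsub>D\<^esub> (x \<otimes>\<^bsub>D\<^esub> y) = (c \<odot>\<^bsub>D\<^esub> x) \<otimes>\<^bsub>D\<^esub> y \<and>
        c \<odot>\<^bsub>D\<^esub> (x \<otimes>\<^bsub>D\<^esub> y) = x \<otimes>\<^bsub>D\<^esub> (c \<odot>\<^bsub>D\<^esub> y))"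

definition k_subalgebra :: "'k ring \<Rightarrow> 'a set \<Rightarrow> ('k,'a) module \<Rightarrow> bool" where
  "k_subalgebra K S D \<longleftrightarrow> subring S D \<and>
     (\<forall>c\<in>carrier K. \<forall>x\<in>S. c \<odot>\<^bsub>D\<^esub> x \<in> S)"

definition scalars :: "'k ring \<Rightarrow> ('k,'a) module \<Rightarrow> 'a set" where
  "scalars K D = {c \<odot>\<^bsub>D\<^esub> \<one>\<^bsub>D\<^esub> | c. c \<in> carrier K}"

definition centralizer :: "('a,'m) ring_scheme \<Rightarrow> 'a set \<Rightarrow> 'a set" where
  "centralizer R S = {r \<in> carrier R. \<forall>s\<in>S. r \<otimes>\<^bsub>R\<^esub> s = s \<otimes>\<^bsub>R\<^esub> r}"

text \<open>Elements are classes of finite formal sums (lists) of pairs modulo the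
  congruence generated by biadditivity and S-balancedness.\<close>

inductive tens_eq :: "('a,'m) ring_scheme \<Rightarrow> 'a set \<Rightarrow> ('a \<times> 'a) list \<Rightarrow> ('a \<times> 'a) list \<Rightarrow> bool"
  for R S where
  refl: "set xs \<subseteq> carrier R \<times> carrier R \<Longrightarrow> tens_eq R S xs xs"
| sym: "tens_eq R S xs ys \<Longrightarrow> tens_eq R S ys xs"
| trans: "tens_eq R S xs ys \<Longrightarrow> tens_eq R S ys zs \<Longrightarrow> tens_eq R S xs zs"
| app: "tens_eq R S xs ys \<Longrightarrow> tens_eq R S us vs \<Longrightarrow> tens_eq R S (xs @ us) (ys @ vs)"
| swap: "\<lbrakk>a \<in> carrier R; b \<in> carrier R; c \<in> carrier R; d \<in> carrier R\<rbrakk> \<Longrightarrow>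
           tens_eq R S [(a,b),(c,d)] [(c,d),(a,b)]"
| addl: "\<lbrakk>a \<in> carrier R; a' \<in> carrier R; b \<in> carrier R\<rbrakk> \<Longrightarrow>
           tens_eq R S [(a \<oplus>\<^bsub>R\<^esub> a', b)] [(a,b),(a',b)]"
| addr: "\<lbrakk>a \<in> carrier R; b \<in> carrier R; b' \<in> carrier R\<rbrakk> \<Longrightarrow>
           tens_eq R S [(a, b \<oplus>\<^bsub>R\<^esub> b')] [(a,b),(a,b')]"
| zerol: "b \<in> carrier R \<Longrightarrow> tens_eq R S [(\<zero>\<^bsub>R\<^esub>, b)] []"
| zeror: "a \<in> carrier R \<Longrightarrow> tens_eq R S [(a, \<zero>\<^bsub>R\<^esub>)] []"
| bal: "\<lbrakk>a \<in> carrier R; b \<in> carrier R; s \<in> S\<rbrakk> \<Longrightarrow>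
           tens_eq R S [(a \<otimes>\<^bsub>R\<^esub> s, b)] [(a, s \<otimes>\<^bsub>R\<^esub> b)]"

definition tcls :: "('a,'m) ring_scheme \<Rightarrow> 'a set \<Rightarrow> ('a \<times> 'a) list \<Rightarrow> ('a \<times> 'a) list set" where
  "tcls R S xs = {ys. tens_eq R S xs ys}"

definition tens_carrier :: "('a,'m) ring_scheme \<Rightarrow> 'a set \<Rightarrow> ('a \<times> 'a) list set set" where
  "tens_carrier R S = tcls R S ` {xs. set xs \<subseteq> carrier R \<times> carrier R}"

definition trep :: "('a \<times> 'a) list set \<Rightarrow> ('a \<times> 'a) list" where
  "trep X = (SOME xs. xs \<in> X)"

definition tadd :: "('a,'m) ring_scheme \<Rightarrow> 'a set \<Rightarrow> ('a \<times> 'a) list set \<Rightarrow> ('a \<times> 'a) list set \<Rightarrow> ('a \<times> 'a) list set" where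
  "tadd R S X Y = tcls R S (trep X @ trep Y)"

definition tlact :: "('a,'m) ring_scheme \<Rightarrow> 'a set \<Rightarrow> 'a \<Rightarrow> ('a \<times> 'a) list set \<Rightarrow> ('a \<times> 'a) list set" where
  "tlact R S d X = tcls R S (map (\<lambda>(a,b). (d \<otimes>\<^bsub>R\<^esub> a, b)) (trep X))"

definition tract :: "('a,'m) ring_scheme \<Rightarrow> 'a set \<Rightarrow> ('a \<times> 'a) list set \<Rightarrow> 'a \<Rightarrow> ('a \<times> 'a) list set" where
  "tract R S X d = tcls R S (map (\<lambda>(a,b). (a, b \<otimes>\<^bsub>R\<^esub> d)) (trep X))"

definition lmultsum :: "('a,'m) ring_scheme \<Rightarrow> ('a \<times> 'a) list \<Rightarrow> 'a" where
  "lmultsum R xs = foldr (\<lambda>(a,b) acc. (a \<otimes>\<^bsub>R\<^esub> b) \<oplus>\<^bsub>R\<^esub> acc) xs \<zero>\<^bsub>R\<^esub>"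

definition tmultmap :: "('a,'m) ring_scheme \<Rightarrow> ('a \<times> 'a) list set \<Rightarrow> 'a" where
  "tmultmap R X = lmultsum R (trep X)"

definition separable_algebra :: "'k ring \<Rightarrow> ('k,'a) module \<Rightarrow> bool" where
  "separable_algebra K D \<longleftrightarrow> k_algebra K D \<and>
     (\<exists>\<sigma>. (\<forall>d\<in>carrier D. \<sigma> d \<in> tens_carrier D (scalars K D)) \<and>
          (\<forall>d\<in>carrier D. tmultmap D (\<sigma> d) = d) \<and>
          (\<forall>d\<in>carrier D. \<forall>x\<in>carrier D.
              \<sigma> (d \<oplus>\<^bsub>D\<^esub> x) = tadd D (scalars K D) (\<sigma> d) (\<sigma> x) \<and>
              \<sigma> (d \<otimes>\<^bsub>D\<^esub> x) = tlact D (scalars K D) d (\<sigma> x) \<and>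
              \<sigma> (x \<otimes>\<^bsub>D\<^esub> d) = tract D (scalars K D) (\<sigma> x) d))"

definition bimodule_map :: "('k,'a) module \<Rightarrow> 'a set \<Rightarrow> ('a \<Rightarrow> 'a) \<Rightarrow> bool" where
  "bimodule_map D S E \<longleftrightarrow> (\<forall>m\<in>carrier D. E m \<in> S) \<and>
     (\<forall>m\<in>carrier D. \<forall>m'\<in>carrier D. E (m \<oplus>\<^bsub>D\<^esub> m') = E m \<oplus>\<^bsub>D\<^esub> E m') \<and>
     (\<forall>s\<in>S. \<forall>m\<in>carrier D. E (s \<otimes>\<^bsub>D\<^esub> m) = s \<otimes>\<^bsub>D\<^esub> E m \<and> E (m \<otimes>\<^bsub>D\<^esub> s) = E m \<otimes>\<^bsub>D\<^esub> s)"

definition quasi_basis :: "('k,'a) module \<Rightarrow> ('a \<Rightarrow> 'a) \<Rightarrow> (nat \<Rightarrow> 'a) \<Rightarrow> (nat \<Rightarrow> 'a) \<Rightarrow> nat \<Rightarrow> bool" where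
  "quasi_basis D E x y n \<longleftrightarrow> (\<forall>i<n. x i \<in> carrier D \<and> y i \<in> carrier D) \<and>
     (\<forall>m\<in>carrier D.
        (\<Oplus>\<^bsub>D\<^esub>i\<in>{..<n}. E (m \<otimes>\<^bsub>D\<^esub> x i) \<otimes>\<^bsub>D\<^esub> y i) = m \<and>
        (\<Oplus>\<^bsub>D\<^esub>i\<in>{..<n}. x i \<otimes>\<^bsub>D\<^esub> E (y i \<otimes>\<^bsub>D\<^esub> m)) = m)"

definition bc_mult_list :: "('k,'a) module \<Rightarrow> ('a \<Rightarrow> 'a) \<Rightarrow> ('a \<times> 'a) list \<Rightarrow> ('a \<times> 'a) list \<Rightarrow> ('a \<times> 'a) list" where
  "bc_mult_list R ES xs ys =
     concat (map (\<lambda>(a,b). map (\<lambda>(c,d). (a \<otimes>\<^bsub>R\<^esub> ES (b \<otimes>\<^bsub>R\<^esub> c), d)) ys) xs)"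

definition bc :: "('k,'a) module \<Rightarrow> 'a set \<Rightarrow> ('a \<Rightarrow> 'a) \<Rightarrow> (nat \<Rightarrow> 'a) \<Rightarrow> (nat \<Rightarrow> 'a) \<Rightarrow> nat
                  \<Rightarrow> ('k, ('a \<times> 'a) list set) module" where
  "bc R S ES r s n =
     \<lparr> carrier = tens_carrier R S,
       mult = (\<lambda>X Y. tcls R S (bc_mult_list R ES (trep X) (trep Y))),
       one = tcls R S (map (\<lambda>i. (r i, s i)) [0..<n]),
       zero = tcls R S [],
       add = (\<lambda>X Y. tadd R S X Y),
       smult = (\<lambda>c X. tcls R S (map (\<lambda>(a,b). (c \<odot>\<^bsub>R\<^esub> a, b)) (trep X))) \<rparr>"

definition bc_incl :: "('k,'a) module \<Rightarrow> 'a set \<Rightarrow> (nat \<Rightarrow> 'a) \<Rightarrow> (nat \<Rightarrow> 'a) \<Rightarrow> nat \<Rightarrow> 'a \<Rightarrow> ('a \<times> 'a) list set" where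
  "bc_incl R S r s n a = tcls R S (map (\<lambda>i. (a \<otimes>\<^bsub>R\<^esub> r i, s i)) [0..<n])"

definition bc_E :: "('k,'a) module \<Rightarrow> 'k \<Rightarrow> ('a \<times> 'a) list set \<Rightarrow> 'a" where
  "bc_E R lam X = lam \<odot>\<^bsub>R\<^esub> lmultsum R (trep X)"

text \<open>new quasi-basis \<lambda>^{-1} r_i \<otimes> 1 and 1 \<otimes> s_i\<close>
definition bc_x :: "'k ring \<Rightarrow> ('k,'a) module \<Rightarrow> 'a set \<Rightarrow> (nat \<Rightarrow> 'a) \<Rightarrow> 'k \<Rightarrow> nat \<Rightarrow> ('a \<times> 'a) list set" where
  "bc_x K R S r lam i = tcls R S [((inv\<^bsub>K\<^esub> lam) \<odot>\<^bsub>R\<^esub> r i, \<one>\<^bsub>R\<^esub>)]"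

definition bc_y :: "('k,'a) module \<Rightarrow> 'a set \<Rightarrow> (nat \<Rightarrow> 'a) \<Rightarrow> nat \<Rightarrow> ('a \<times> 'a) list set" where
  "bc_y R S s i = tcls R S [(\<one>\<^bsub>R\<^esub>, s i)]"

definition free_right_with_basis_in :: "('k,'a) module \<Rightarrow> 'a set \<Rightarrow> 'a set \<Rightarrow> bool" where
  "free_right_with_basis_in D Sub C \<longleftrightarrow>
     (\<exists>Bs. Bs \<subseteq> C \<and>
        (\<forall>X\<in>carrier D. \<exists>!f. f \<in> Bs \<rightarrow>\<^sub>E Sub \<and> finite {b\<in>Bs. f b \<noteq> \<zero>\<^bsub>D\<^esub>} \<and>
            X = (\<Oplus>\<^bsub>D\<^esub>b\<in>{b\<in>Bs. f b \<noteq> \<zero>\<^bsub>D\<^esub>}. b \<otimes>\<^bsub>D\<^esub> f b)))"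

end

theory Submission
  imports Defs
begin

(* Let R \<subseteq> T be strongly separable with expectation E' and quasi-basis (x_i, y_i), let S \<subseteq> R,
   and let T be free as a right R-module on a basis contained in A = C_T(S). Writing
   x_i = \<Sum>_b b c_i(b) in that basis, only finitely many b occur, and the elements
   \<gamma>_b = \<Sum>_i c_i(b) y_i lie in A (uniqueness of coordinates) and form a dual basis:
   X = \<Sum>_b b E'(\<gamma>_b X), X = \<Sum>_b E'(X b) \<gamma>_b and \<Sum>_b b \<gamma>_b = \<lambda>\<inverse>.
   If E' maps A into the scalars k, then for d \<in> A the coefficients E'(\<gamma>_b' d b) are scalars,
   so the two expansions show that e = \<Sum>_b b \<otimes> \<gamma>_b \<in> A \<otimes>_k A commutes with A, and
   d \<mapsto> \<lambda> d e splits the multiplication of A.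
   The basic construction M \<subseteq> M_1 of a strongly separable irreducible extension N \<subseteq> M is again
   strongly separable and irreducible, with expectation a \<otimes> b \<mapsto> \<lambda> a b and the same \<lambda>.
   Irreducibility of N \<subseteq> M (resp. M \<subseteq> M_1) is exactly what makes E'(A) scalar in the towers
   N \<subseteq> M \<subseteq> M_1 and M \<subseteq> M_1 \<subseteq> M_2, so depth two gives separability of A and of B. *)

section \<open>Formal sums of pairs modulo the balanced tensor relations\<close>

declare tens_eq.trans [trans]

lemma count_list_concat_transpose:
  "count_list (concat (map (\<lambda>x. map (g x) ys) xs)) z = count_list (concat (map (\<lambda>y. map (\<lambda>x. g x y) xs) ys)) z"
proof (induction xs)
  case Nil
  then show ?case by (induction ys) auto
next
  case (Cons x xs)
  have "count_list (concat (map (\<lambda>y. map (\<lambda>x'. g x' y) (x # xs)) ys)) z =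
        count_list (map (g x) ys) z + count_list (concat (map (\<lambda>y. map (\<lambda>x. g x y) xs) ys)) z"
    by (induction ys) auto
  then show ?case using Cons by simp
qed

locale tensor_over = ring R for R (structure) +
  fixes S :: "'a set"
  assumes S_subset: "S \<subseteq> carrier R"
begin

definition carrier_pairs :: "('a \<times> 'a) list \<Rightarrow> bool" where
  "carrier_pairs xs \<longleftrightarrow> set xs \<subseteq> carrier R \<times> carrier R"

lemma carrier_pairs_simps [simp]:
  "carrier_pairs []"
  "carrier_pairs (p # xs) \<longleftrightarrow> fst p \<in> carrier R \<and> snd p \<in> carrier R \<and> carrier_pairs xs"
  "carrier_pairs (xs @ ys) \<longleftrightarrow> carrier_pairs xs \<and> carrier_pairs ys"
  by (auto simp: carrier_pairs_def mem_Times_iff)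

lemma carrier_pairs_concat [simp]: "carrier_pairs (concat xss) \<longleftrightarrow> (\<forall>xs\<in>set xss. carrier_pairs xs)"
  by (auto simp: carrier_pairs_def)

lemma carrier_pairs_map [simp]:
  "carrier_pairs (map f xs) \<longleftrightarrow> (\<forall>x\<in>set xs. fst (f x) \<in> carrier R \<and> snd (f x) \<in> carrier R)"
  by (simp add: carrier_pairs_def image_subset_iff mem_Times_iff)

lemma carrier_pairs_iff: "carrier_pairs xs \<longleftrightarrow> (\<forall>a b. (a, b) \<in> set xs \<longrightarrow> a \<in> carrier R \<and> b \<in> carrier R)"
  by (auto simp: carrier_pairs_def)

lemma carrier_pairsE:
  assumes "carrier_pairs xs" "p \<in> set xs"
  obtains a b where "p = (a, b)" "a \<in> carrier R" "b \<in> carrier R"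
  using assms by (cases p) (auto simp: carrier_pairs_def)

abbreviation teq where "teq \<equiv> tens_eq R S"

lemma teq_carrier_pairs: "teq xs ys \<Longrightarrow> carrier_pairs xs \<and> carrier_pairs ys"
  by (induction rule: tens_eq.induct) (use S_subset in \<open>auto simp: carrier_pairs_def\<close>)

lemma teq_refl: "carrier_pairs xs \<Longrightarrow> teq xs xs"
  by (rule tens_eq.refl) (simp add: carrier_pairs_def)

lemma teq_rotate: "carrier_pairs [x] \<Longrightarrow> carrier_pairs ys \<Longrightarrow> teq ([x] @ ys) (ys @ [x])"
proof (induction ys)
  case Nil
  then show ?case by (simp add: teq_refl)
next
  case (Cons y ys)
  have "teq [x, y] [y, x]"
    using tens_eq.swap[of "fst x" R "snd x" "fst y" "snd y" S] Cons.prems by simp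
  then have "teq ([x, y] @ ys) ([y, x] @ ys)"
    by (rule tens_eq.app) (use Cons.prems in \<open>simp add: teq_refl\<close>)
  moreover have "teq ([y, x] @ ys) ([y] @ (ys @ [x]))"
    using tens_eq.app[OF teq_refl[of "[y]"] Cons.IH] Cons.prems by simp
  ultimately have "teq ([x, y] @ ys) ([y] @ (ys @ [x]))" by (rule tens_eq.trans)
  then show ?case by simp
qed

lemma teq_perm: "carrier_pairs xs \<Longrightarrow> (\<And>z. count_list xs z = count_list ys z) \<Longrightarrow> teq xs ys"
proof (induction xs arbitrary: ys)
  case Nil
  have "z \<notin> set ys" for z using Nil.prems(2)[of z] count_list_0_iff[of ys z] by simp
  then have "ys = []" by (cases ys) auto
  then show ?case by (simp add: teq_refl)
next
  case (Cons x xs)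
  have "x \<in> set ys" using Cons.prems(2)[of x] count_list_0_iff[of ys x] by simp
  then obtain ys1 ys2 where ys: "ys = ys1 @ x # ys2" by (meson split_list)
  have "z \<in> set (x # xs)" if "z \<in> set ys" for z
  proof -
    have "count_list (x # xs) z \<noteq> 0" using that Cons.prems(2)[of z] count_list_0_iff[of ys z] by simp
    then show ?thesis using count_list_0_iff by metis
  qed
  then have "set ys \<subseteq> set (x # xs)" by blast
  then have c: "carrier_pairs ys1" "carrier_pairs ys2" using Cons.prems(1) ys by (auto simp: carrier_pairs_def)
  have cx: "carrier_pairs [x]" "carrier_pairs xs" using Cons.prems(1) by auto
  have "count_list xs z = count_list (ys1 @ ys2) z" for z
    using Cons.prems(2)[of z] unfolding ys by (simp split: if_splits)
  then have "teq xs (ys1 @ ys2)" by (rule Cons.IH[OF cx(2)])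
  then have "teq ([x] @ xs) ([x] @ ys1 @ ys2)" by (rule tens_eq.app[OF teq_refl[OF cx(1)]])
  moreover have "teq ([x] @ ys1 @ ys2) (ys1 @ [x] @ ys2)"
    using tens_eq.app[OF teq_rotate[OF cx(1) c(1)] teq_refl[OF c(2)]] by simp
  ultimately have "teq ([x] @ xs) (ys1 @ [x] @ ys2)" by (rule tens_eq.trans)
  then show ?case unfolding ys by simp
qed

lemma teq_concat_map:
  "(\<And>p. p \<in> set xs \<Longrightarrow> teq (F p) (G p)) \<Longrightarrow> teq (concat (map F xs)) (concat (map G xs))"
proof (induction xs)
  case Nil
  then show ?case by (simp add: teq_refl)
next
  case (Cons a xs)
  have "teq (F a @ concat (map F xs)) (G a @ concat (map G xs))"
    by (rule tens_eq.app) (use Cons in auto)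
  then show ?case by simp
qed

lemma teq_map: "(\<And>p. p \<in> set xs \<Longrightarrow> teq [f p] [g p]) \<Longrightarrow> teq (map f xs) (map g xs)"
  using teq_concat_map[of xs "\<lambda>p. [f p]" "\<lambda>p. [g p]"] by simp

lemma teq_map_split:
  assumes "\<And>p. p \<in> set xs \<Longrightarrow> teq [f p] [g p, h p]"
  shows "teq (map f xs) (map g xs @ map h xs)"
proof -
  have 1: "teq (map f xs) (concat (map (\<lambda>p. [g p, h p]) xs))"
    using teq_concat_map[of xs "\<lambda>p. [f p]" "\<lambda>p. [g p, h p]"] assms by simp
  have "carrier_pairs (concat (map (\<lambda>p. [g p, h p]) xs))" using 1 teq_carrier_pairs by blast
  moreover have "\<And>z. count_list (concat (map (\<lambda>p. [g p, h p]) xs)) z = count_list (map g xs @ map h xs) z"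
    by (induction xs) auto
  ultimately have "teq (concat (map (\<lambda>p. [g p, h p]) xs)) (map g xs @ map h xs)"
    by (rule teq_perm)
  then show ?thesis by (rule tens_eq.trans[OF 1])
qed

lemma teq_map_zero: "(\<And>p. p \<in> set xs \<Longrightarrow> teq [f p] []) \<Longrightarrow> teq (map f xs) []"
  using teq_concat_map[of xs "\<lambda>p. [f p]" "\<lambda>p. []"] by (simp add: map_replicate_const)

lemma teq_map_fst_add:
  assumes "carrier_pairs ys"
    and "\<And>c. c \<in> carrier R \<Longrightarrow> f c \<in> carrier R \<and> g c \<in> carrier R \<and> h c = f c \<oplus> g c"
  shows "teq (map (\<lambda>(c, d). (h c, d)) ys) (map (\<lambda>(c, d). (f c, d)) ys @ map (\<lambda>(c, d). (g c, d)) ys)"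
proof (rule teq_map_split)
  fix p assume "p \<in> set ys"
  with assms(1) obtain c d where "p = (c, d)" "c \<in> carrier R" "d \<in> carrier R" by (rule carrier_pairsE)
  then show "teq [case p of (c, d) \<Rightarrow> (h c, d)] [case p of (c, d) \<Rightarrow> (f c, d), case p of (c, d) \<Rightarrow> (g c, d)]"
    using tens_eq.addl[of "f c" R "g c" d S] assms(2)[of c] by simp
qed

lemma teq_map_fst_zero:
  assumes "carrier_pairs ys" and "\<And>c. c \<in> carrier R \<Longrightarrow> f c = \<zero>"
  shows "teq (map (\<lambda>(c, d). (f c, d)) ys) []"
proof (rule teq_map_zero)
  fix p assume "p \<in> set ys"
  with assms(1) obtain c d where "p = (c, d)" "c \<in> carrier R" "d \<in> carrier R" by (rule carrier_pairsE)
  then show "teq [case p of (c, d) \<Rightarrow> (f c, d)] []" using tens_eq.zerol[of d R S] assms(2)[of c] by simp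
qed

lemma teq_concat_transpose:
  "carrier_pairs (concat (map (\<lambda>x. map (g x) ys) xs)) \<Longrightarrow>
   teq (concat (map (\<lambda>x. map (g x) ys) xs)) (concat (map (\<lambda>y. map (\<lambda>x. g x y) xs) ys))"
  by (erule teq_perm) (rule count_list_concat_transpose)

lemma teq_concat_map_respecting:
  assumes "teq xs ys"
    and closed: "\<And>a b. a \<in> carrier R \<Longrightarrow> b \<in> carrier R \<Longrightarrow> carrier_pairs (F (a, b))"
    and addl: "\<And>a a' b. a \<in> carrier R \<Longrightarrow> a' \<in> carrier R \<Longrightarrow> b \<in> carrier R \<Longrightarrow>
                 teq (F (a \<oplus> a', b)) (F (a, b) @ F (a', b))"
    and addr: "\<And>a b b'. a \<in> carrier R \<Longrightarrow> b \<in> carrier R \<Longrightarrow> b' \<in> carrier R \<Longrightarrow>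
                 teq (F (a, b \<oplus> b')) (F (a, b) @ F (a, b'))"
    and zerol: "\<And>b. b \<in> carrier R \<Longrightarrow> teq (F (\<zero>, b)) []"
    and zeror: "\<And>a. a \<in> carrier R \<Longrightarrow> teq (F (a, \<zero>)) []"
    and bal: "\<And>a b s. a \<in> carrier R \<Longrightarrow> b \<in> carrier R \<Longrightarrow> s \<in> S \<Longrightarrow> teq (F (a \<otimes> s, b)) (F (a, s \<otimes> b))"
  shows "teq (concat (map F xs)) (concat (map F ys))"
  using assms(1)
proof (induction rule: tens_eq.induct)
  case (refl xs)
  have "carrier_pairs (F p)" if "p \<in> set xs" for p
    using closed[of "fst p" "snd p"] refl.hyps that by auto
  then show ?case by (intro teq_refl) simp
next
  case (swap a b c d)
  have "teq (F (a, b) @ F (c, d)) (F (c, d) @ F (a, b))"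
    by (rule teq_perm) (use swap closed in simp_all)
  then show ?case by simp
next
  case (sym xs ys)
  show ?case using sym.IH by (rule tens_eq.sym)
next
  case (trans xs ys zs)
  show ?case using trans.IH by (rule tens_eq.trans)
next
  case (app xs ys us vs)
  show ?case using tens_eq.app[OF app.IH] by simp
qed (use addl addr zerol zeror bal in simp_all)

lemma teq_map_pair:
  assumes "teq xs ys"
    and f: "\<And>a. a \<in> carrier R \<Longrightarrow> f a \<in> carrier R" "\<And>a a'. a \<in> carrier R \<Longrightarrow> a' \<in> carrier R \<Longrightarrow> f (a \<oplus> a') = f a \<oplus> f a'"
      "\<And>a s. a \<in> carrier R \<Longrightarrow> s \<in> S \<Longrightarrow> f (a \<otimes> s) = f a \<otimes> s"
    and g: "\<And>b. b \<in> carrier R \<Longrightarrow> g b \<in> carrier R" "\<And>b b'. b \<in> carrier R \<Longrightarrow> b' \<in> carrier R \<Longrightarrow> g (b \<oplus> b') = g b \<oplus> g b'"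
      "\<And>b s. b \<in> carrier R \<Longrightarrow> s \<in> S \<Longrightarrow> g (s \<otimes> b) = s \<otimes> g b"
  shows "teq (map (\<lambda>(a, b). (f a, g b)) xs) (map (\<lambda>(a, b). (f a, g b)) ys)"
proof -
  have additive_zero: "h \<zero> = \<zero>"
    if "\<And>a. a \<in> carrier R \<Longrightarrow> h a \<in> carrier R" "\<And>a a'. a \<in> carrier R \<Longrightarrow> a' \<in> carrier R \<Longrightarrow> h (a \<oplus> a') = h a \<oplus> h a'"
    for h
    using that(2)[of \<zero> \<zero>] that(1) by (metis add.l_cancel_one' zero_closed l_zero)
  have "teq (concat (map (\<lambda>p. [case p of (a, b) \<Rightarrow> (f a, g b)]) xs))
            (concat (map (\<lambda>p. [case p of (a, b) \<Rightarrow> (f a, g b)]) ys))"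
  proof (rule teq_concat_map_respecting[OF assms(1)])
    fix a a' b assume "a \<in> carrier R" "a' \<in> carrier R" "b \<in> carrier R"
    then show "teq [case (a \<oplus> a', b) of (a, b) \<Rightarrow> (f a, g b)] ([case (a, b) of (a, b) \<Rightarrow> (f a, g b)] @ [case (a', b) of (a, b) \<Rightarrow> (f a, g b)])"
      using tens_eq.addl[of "f a" R "f a'" "g b" S] f g by auto
  next
    fix a b b' assume "a \<in> carrier R" "b \<in> carrier R" "b' \<in> carrier R"
    then show "teq [case (a, b \<oplus> b') of (a, b) \<Rightarrow> (f a, g b)] ([case (a, b) of (a, b) \<Rightarrow> (f a, g b)] @ [case (a, b') of (a, b) \<Rightarrow> (f a, g b)])"
      using tens_eq.addr[of "f a" R "g b" "g b'" S] f g by auto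
  next
    fix b assume "b \<in> carrier R"
    then show "teq [case (\<zero>, b) of (a, b) \<Rightarrow> (f a, g b)] []"
      using tens_eq.zerol[of "g b" R S] additive_zero[OF f(1,2)] g by auto
  next
    fix a assume "a \<in> carrier R"
    then show "teq [case (a, \<zero>) of (a, b) \<Rightarrow> (f a, g b)] []"
      using tens_eq.zeror[of "f a" R S] additive_zero[OF g(1,2)] f by auto
  next
    fix a b s assume "a \<in> carrier R" "b \<in> carrier R" "s \<in> S"
    then show "teq [case (a \<otimes> s, b) of (a, b) \<Rightarrow> (f a, g b)] [case (a, s \<otimes> b) of (a, b) \<Rightarrow> (f a, g b)]"
      using tens_eq.bal[of "f a" R "g b" s S] f g by auto
  qed (use f g in auto)
  then show ?thesis by simp
qed

lemma teq_lmult: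
  assumes "teq xs ys" "d \<in> carrier R"
  shows "teq (map (\<lambda>(a, b). (d \<otimes> a, b)) xs) (map (\<lambda>(a, b). (d \<otimes> a, b)) ys)"
proof -
  have "teq (map (\<lambda>(a, b). ((\<lambda>a. d \<otimes> a) a, id b)) xs) (map (\<lambda>(a, b). ((\<lambda>a. d \<otimes> a) a, id b)) ys)"
    by (rule teq_map_pair[OF assms(1)]) (use assms(2) S_subset in \<open>auto simp: r_distr m_assoc\<close>)
  then show ?thesis by simp
qed

lemma teq_rmult:
  assumes "teq xs ys" "d \<in> carrier R"
  shows "teq (map (\<lambda>(a, b). (a, b \<otimes> d)) xs) (map (\<lambda>(a, b). (a, b \<otimes> d)) ys)"
proof -
  have "teq (map (\<lambda>(a, b). (id a, (\<lambda>b. b \<otimes> d) b)) xs) (map (\<lambda>(a, b). (id a, (\<lambda>b. b \<otimes> d) b)) ys)"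
    by (rule teq_map_pair[OF assms(1)]) (use assms(2) S_subset in \<open>auto simp: l_distr m_assoc\<close>)
  then show ?thesis by simp
qed

lemma teq_uminus_cancel: "carrier_pairs xs \<Longrightarrow> teq (map (\<lambda>(a, b). (\<ominus> a, b)) xs @ xs) []"
proof -
  assume c: "carrier_pairs xs"
  have "teq (map (\<lambda>p. (\<ominus> fst p \<oplus> fst p, snd p)) xs) (map (\<lambda>(a, b). (\<ominus> a, b)) xs @ map id xs)"
  proof (rule teq_map_split)
    fix p assume "p \<in> set xs"
    then show "teq [(\<ominus> fst p \<oplus> fst p, snd p)] [case p of (a, b) \<Rightarrow> (\<ominus> a, b), id p]"
      using c tens_eq.addl[of "\<ominus> fst p" R "fst p" "snd p" S] by (auto elim: carrier_pairsE)
  qed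
  moreover have "teq (map (\<lambda>p. (\<ominus> fst p \<oplus> fst p, snd p)) xs) []"
  proof (rule teq_map_zero)
    fix p assume "p \<in> set xs"
    then show "teq [(\<ominus> fst p \<oplus> fst p, snd p)] []"
      using c tens_eq.zerol[of "snd p" R S] by (auto simp: l_neg elim: carrier_pairsE)
  qed
  ultimately show ?thesis using tens_eq.trans[OF tens_eq.sym] by simp
qed

lemma foldr_add_closed: "(\<And>p. p \<in> set l \<Longrightarrow> f p \<in> carrier R) \<Longrightarrow> foldr (\<lambda>p acc. f p \<oplus> acc) l \<zero> \<in> carrier R"
  by (induction l) auto

lemma finsum_set_foldr:
  "distinct l \<Longrightarrow> (\<And>p. p \<in> set l \<Longrightarrow> f p \<in> carrier R) \<Longrightarrow> finsum R f (set l) = foldr (\<lambda>p acc. f p \<oplus> acc) l \<zero>"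
  by (induction l) (simp_all add: finsum_insert Pi_def)

lemma teq_foldr_left:
  "(\<And>p. p \<in> set l \<Longrightarrow> f p \<in> carrier R) \<Longrightarrow> d \<in> carrier R \<Longrightarrow>
   teq [(foldr (\<lambda>p acc. f p \<oplus> acc) l \<zero>, d)] (map (\<lambda>p. (f p, d)) l)"
proof (induction l)
  case Nil
  then show ?case by (simp add: tens_eq.zerol)
next
  case (Cons a l)
  let ?rest = "foldr (\<lambda>p acc. f p \<oplus> acc) l \<zero>"
  have "?rest \<in> carrier R" using Cons.prems by (intro foldr_add_closed) auto
  then have "teq [(f a \<oplus> ?rest, d)] ([(f a, d)] @ [(?rest, d)])"
    using Cons.prems tens_eq.addl[of "f a" R ?rest d S] by simp
  moreover have "teq ([(f a, d)] @ [(?rest, d)]) ([(f a, d)] @ map (\<lambda>p. (f p, d)) l)"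
    by (rule tens_eq.app[OF teq_refl Cons.IH]) (use Cons.prems in auto)
  ultimately have "teq [(f a \<oplus> ?rest, d)] ([(f a, d)] @ map (\<lambda>p. (f p, d)) l)" by (rule tens_eq.trans)
  then show ?case by simp
qed

lemma teq_foldr_right:
  "(\<And>p. p \<in> set l \<Longrightarrow> f p \<in> carrier R) \<Longrightarrow> d \<in> carrier R \<Longrightarrow>
   teq [(d, foldr (\<lambda>p acc. f p \<oplus> acc) l \<zero>)] (map (\<lambda>p. (d, f p)) l)"
proof (induction l)
  case Nil
  then show ?case by (simp add: tens_eq.zeror)
next
  case (Cons a l)
  let ?rest = "foldr (\<lambda>p acc. f p \<oplus> acc) l \<zero>"
  have "?rest \<in> carrier R" using Cons.prems by (intro foldr_add_closed) auto
  then have "teq [(d, f a \<oplus> ?rest)] ([(d, f a)] @ [(d, ?rest)])"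
    using Cons.prems tens_eq.addr[of d R "f a" ?rest S] by simp
  moreover have "teq ([(d, f a)] @ [(d, ?rest)]) ([(d, f a)] @ map (\<lambda>p. (d, f p)) l)"
    by (rule tens_eq.app[OF teq_refl Cons.IH]) (use Cons.prems in auto)
  ultimately have "teq [(d, f a \<oplus> ?rest)] ([(d, f a)] @ map (\<lambda>p. (d, f p)) l)" by (rule tens_eq.trans)
  then show ?case by simp
qed

lemma teq_finsum_left:
  "distinct l \<Longrightarrow> (\<And>p. p \<in> set l \<Longrightarrow> f p \<in> carrier R) \<Longrightarrow> d \<in> carrier R \<Longrightarrow>
   teq [(finsum R f (set l), d)] (map (\<lambda>p. (f p, d)) l)"
  using teq_foldr_left[of l f d] finsum_set_foldr[of l f] by simp

lemma teq_finsum_right: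
  "distinct l \<Longrightarrow> (\<And>p. p \<in> set l \<Longrightarrow> f p \<in> carrier R) \<Longrightarrow> d \<in> carrier R \<Longrightarrow>
   teq [(d, finsum R f (set l))] (map (\<lambda>p. (d, f p)) l)"
  using teq_foldr_right[of l f d] finsum_set_foldr[of l f] by simp

lemma teq_finsum_lessThan_left:
  "(\<And>i. i < n \<Longrightarrow> f i \<in> carrier R) \<Longrightarrow> d \<in> carrier R \<Longrightarrow>
   teq [(finsum R f {..<n}, d)] (map (\<lambda>i. (f i, d)) [0..<n])"
  using teq_finsum_left[of "[0..<n]" f d] by (simp add: atLeast0LessThan)

lemma teq_finsum_lessThan_right:
  "(\<And>i. i < n \<Longrightarrow> f i \<in> carrier R) \<Longrightarrow> d \<in> carrier R \<Longrightarrow>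
   teq [(d, finsum R f {..<n})] (map (\<lambda>i. (d, f i)) [0..<n])"
  using teq_finsum_right[of "[0..<n]" f d] by (simp add: atLeast0LessThan)

lemma lmultsum_Nil [simp]: "lmultsum R [] = \<zero>"
  by (simp add: lmultsum_def)

lemma lmultsum_Cons [simp]: "lmultsum R ((a, b) # xs) = a \<otimes> b \<oplus> lmultsum R xs"
  by (simp add: lmultsum_def)

lemma lmultsum_closed: "carrier_pairs xs \<Longrightarrow> lmultsum R xs \<in> carrier R"
  by (induction xs) auto

lemma lmultsum_append:
  "carrier_pairs xs \<Longrightarrow> carrier_pairs ys \<Longrightarrow> lmultsum R (xs @ ys) = lmultsum R xs \<oplus> lmultsum R ys"
proof (induction xs)
  case Nil
  then show ?case by (simp add: lmultsum_closed)
next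
  case (Cons p xs)
  then show ?case by (cases p) (simp add: lmultsum_closed a_assoc)
qed

lemma lmultsum_teq: "teq xs ys \<Longrightarrow> lmultsum R xs = lmultsum R ys"
proof (induction rule: tens_eq.induct)
  case (app xs ys us vs)
  then show ?case using teq_carrier_pairs lmultsum_append by metis
next
  case (swap a b c d)
  then show ?case using a_comm[of "a \<otimes> b" "c \<otimes> d"] by simp
qed (use S_subset in \<open>auto simp: l_distr r_distr a_assoc m_assoc\<close>)

lemma lmultsum_map_finsum:
  "distinct l \<Longrightarrow> (\<And>p. p \<in> set l \<Longrightarrow> f p \<in> carrier R \<and> g p \<in> carrier R) \<Longrightarrow>
   lmultsum R (map (\<lambda>p. (f p, g p)) l) = finsum R (\<lambda>p. f p \<otimes> g p) (set l)"
  by (induction l) (auto simp: finsum_insert Pi_def)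

lemma lmultsum_lmult:
  "carrier_pairs xs \<Longrightarrow> d \<in> carrier R \<Longrightarrow> lmultsum R (map (\<lambda>(a, b). (d \<otimes> a, b)) xs) = d \<otimes> lmultsum R xs"
proof (induction xs)
  case (Cons p xs)
  then show ?case by (cases p) (simp add: lmultsum_closed r_distr m_assoc)
qed simp

lemma lmultsum_rmult:
  "carrier_pairs xs \<Longrightarrow> d \<in> carrier R \<Longrightarrow> lmultsum R (map (\<lambda>(a, b). (a, b \<otimes> d)) xs) = lmultsum R xs \<otimes> d"
proof (induction xs)
  case (Cons p xs)
  then show ?case by (cases p) (simp add: lmultsum_closed l_distr m_assoc)
qed simp

abbreviation tclass where "tclass \<equiv> tcls R S"

lemma tclass_eq: "teq xs ys \<Longrightarrow> tclass xs = tclass ys"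
  unfolding tcls_def using tens_eq.sym tens_eq.trans by blast

lemma tclass_eq_iff: "carrier_pairs xs \<Longrightarrow> tclass xs = tclass ys \<longleftrightarrow> teq xs ys"
  using tclass_eq teq_refl tens_eq.sym unfolding tcls_def by blast

lemma teq_trep: "carrier_pairs xs \<Longrightarrow> teq xs (trep (tclass xs))"
  using someI[of "\<lambda>ys. ys \<in> tclass xs" xs] teq_refl unfolding trep_def tcls_def by blast

lemma carrier_pairs_trep: "carrier_pairs xs \<Longrightarrow> carrier_pairs (trep (tclass xs))"
  using teq_trep teq_carrier_pairs by blast

lemma tens_carrier_iff: "X \<in> tens_carrier R S \<longleftrightarrow> (\<exists>xs. carrier_pairs xs \<and> X = tclass xs)"
  by (auto simp: tens_carrier_def carrier_pairs_def)

lemma tclass_in_tens_carrier: "carrier_pairs xs \<Longrightarrow> tclass xs \<in> tens_carrier R S"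
  using tens_carrier_iff by blast

lemma tadd_tclass: "carrier_pairs xs \<Longrightarrow> carrier_pairs ys \<Longrightarrow> tadd R S (tclass xs) (tclass ys) = tclass (xs @ ys)"
  unfolding tadd_def by (rule tclass_eq[OF tens_eq.app[OF tens_eq.sym[OF teq_trep] tens_eq.sym[OF teq_trep]]])

lemma tmultmap_tclass: "carrier_pairs xs \<Longrightarrow> tmultmap R (tclass xs) = lmultsum R xs"
  unfolding tmultmap_def by (rule lmultsum_teq[OF teq_trep, symmetric])

lemma tlact_tclass:
  "carrier_pairs xs \<Longrightarrow> d \<in> carrier R \<Longrightarrow> tlact R S d (tclass xs) = tclass (map (\<lambda>(a, b). (d \<otimes> a, b)) xs)"
  unfolding tlact_def by (rule tclass_eq[OF teq_lmult[OF tens_eq.sym[OF teq_trep]]])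

lemma tract_tclass:
  "carrier_pairs xs \<Longrightarrow> d \<in> carrier R \<Longrightarrow> tract R S (tclass xs) d = tclass (map (\<lambda>(a, b). (a, b \<otimes> d)) xs)"
  unfolding tract_def by (rule tclass_eq[OF teq_rmult[OF tens_eq.sym[OF teq_trep]]])

end

section \<open>The basic construction of a strongly separable irreducible extension\<close>

locale strongly_separable_ext =
  fixes K :: "'k ring" and R :: "('k,'a) module" (structure) and S :: "'a set" and ES :: "'a \<Rightarrow> 'a"
    and r s :: "nat \<Rightarrow> 'a" and n :: nat and lam :: 'k
  assumes field_K: "field K" and algebra_R: "k_algebra K R" and subalgebra_S: "k_subalgebra K S R"
    and irreducible: "centralizer R S = scalars K R" and bimodule_E: "bimodule_map R S ES"
    and qbasis: "quasi_basis R ES r s n" and E_one: "ES \<one> = \<one>"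
    and lamK: "lam \<in> carrier K" and lam0: "lam \<noteq> \<zero>\<^bsub>K\<^esub>"
    and sum_r_s: "(\<Oplus>i\<in>{..<n}. r i \<otimes> s i) = inv\<^bsub>K\<^esub> lam \<odot> \<one>"
begin

lemma ring_R: "ring R" using algebra_R unfolding k_algebra_def by auto
lemma module_R: "module K R" using algebra_R unfolding k_algebra_def by auto
lemma subring_S: "subring S R" using subalgebra_S unfolding k_subalgebra_def by auto
lemma S_subset: "S \<subseteq> carrier R" using subringE(1)[OF subring_S] .

sublocale tensor_over R S by (rule tensor_over.intro[OF ring_R]) (rule tensor_over_axioms.intro[OF S_subset])
sublocale Rmod: module K R by (rule module_R)
sublocale KF: field K by (rule field_K)

lemma smult_mult_left: "c \<in> carrier K \<Longrightarrow> x \<in> carrier R \<Longrightarrow> y \<in> carrier R \<Longrightarrow> c \<odot> (x \<otimes> y) = (c \<odot> x) \<otimes> y"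
  using algebra_R unfolding k_algebra_def by blast

lemma smult_mult_right: "c \<in> carrier K \<Longrightarrow> x \<in> carrier R \<Longrightarrow> y \<in> carrier R \<Longrightarrow> c \<odot> (x \<otimes> y) = x \<otimes> (c \<odot> y)"
  using algebra_R unfolding k_algebra_def by blast

lemma S_one: "\<one> \<in> S" using subringE(3)[OF subring_S] .
lemma S_zero: "\<zero> \<in> S" using subringE(2)[OF subring_S] .
lemma S_carrier: "a \<in> S \<Longrightarrow> a \<in> carrier R" using S_subset by auto
lemma scalar_in_S: "c \<in> carrier K \<Longrightarrow> c \<odot> \<one> \<in> S"
  using subalgebra_S S_one unfolding k_subalgebra_def by auto

lemma smult_as_mult_l: "c \<in> carrier K \<Longrightarrow> x \<in> carrier R \<Longrightarrow> c \<odot> x = (c \<odot> \<one>) \<otimes> x"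
  using smult_mult_left[of c \<one> x] by simp

lemma smult_as_mult_r: "c \<in> carrier K \<Longrightarrow> x \<in> carrier R \<Longrightarrow> c \<odot> x = x \<otimes> (c \<odot> \<one>)"
  using smult_mult_right[of c x \<one>] by simp

lemma E_in_S: "m \<in> carrier R \<Longrightarrow> ES m \<in> S"
  using bimodule_E unfolding bimodule_map_def by auto

lemma E_closed: "m \<in> carrier R \<Longrightarrow> ES m \<in> carrier R"
  using E_in_S S_carrier by auto

lemma E_add: "m \<in> carrier R \<Longrightarrow> m' \<in> carrier R \<Longrightarrow> ES (m \<oplus> m') = ES m \<oplus> ES m'"
  using bimodule_E unfolding bimodule_map_def by auto

lemma E_lmult: "t \<in> S \<Longrightarrow> m \<in> carrier R \<Longrightarrow> ES (t \<otimes> m) = t \<otimes> ES m"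
  using bimodule_E unfolding bimodule_map_def by auto

lemma E_rmult: "t \<in> S \<Longrightarrow> m \<in> carrier R \<Longrightarrow> ES (m \<otimes> t) = ES m \<otimes> t"
  using bimodule_E unfolding bimodule_map_def by auto

lemma E_zero: "ES \<zero> = \<zero>"
  using E_lmult[OF S_zero, of \<zero>] E_closed[of \<zero>] by simp

lemma E_smult: "c \<in> carrier K \<Longrightarrow> m \<in> carrier R \<Longrightarrow> ES (c \<odot> m) = c \<odot> ES m"
  using smult_as_mult_l E_lmult scalar_in_S E_closed by metis

lemma r_closed: "i < n \<Longrightarrow> r i \<in> carrier R" using qbasis unfolding quasi_basis_def by auto
lemma s_closed: "i < n \<Longrightarrow> s i \<in> carrier R" using qbasis unfolding quasi_basis_def by auto

lemma qbasis_expand_left: "m \<in> carrier R \<Longrightarrow> (\<Oplus>i\<in>{..<n}. ES (m \<otimes> r i) \<otimes> s i) = m"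
  using qbasis unfolding quasi_basis_def by auto

lemma qbasis_expand_right: "m \<in> carrier R \<Longrightarrow> (\<Oplus>i\<in>{..<n}. r i \<otimes> ES (s i \<otimes> m)) = m"
  using qbasis unfolding quasi_basis_def by auto

lemma lam_unit: "lam \<in> Units K" using KF.field_Units lamK lam0 by auto
lemma inv_lamK: "inv\<^bsub>K\<^esub> lam \<in> carrier K" using lam_unit by simp

lemma lam_cancel: "x \<in> carrier R \<Longrightarrow> lam \<odot> (inv\<^bsub>K\<^esub> lam \<odot> x) = x"
  using Rmod.smult_assoc1[OF lamK inv_lamK, of x] lam_unit by simp

lemma mult_E_mult_smult:
  assumes "c \<in> carrier K" "a \<in> carrier R" "b \<in> carrier R" "e \<in> carrier R"
  shows "a \<otimes> ES (b \<otimes> (c \<odot> e)) = c \<odot> (a \<otimes> ES (b \<otimes> e))"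
proof -
  have "a \<otimes> ES (b \<otimes> (c \<odot> e)) = a \<otimes> ES (c \<odot> (b \<otimes> e))"
    using assms smult_mult_right[of c b e] by simp
  also have "\<dots> = a \<otimes> (c \<odot> ES (b \<otimes> e))" using assms E_smult by simp
  also have "\<dots> = c \<odot> (a \<otimes> ES (b \<otimes> e))"
    using assms smult_mult_right[of c a "ES (b \<otimes> e)"] E_closed by simp
  finally show ?thesis .
qed

lemma teq_smult_swap: "c \<in> carrier K \<Longrightarrow> x \<in> carrier R \<Longrightarrow> y \<in> carrier R \<Longrightarrow> teq [(c \<odot> x, y)] [(x, c \<odot> y)]"
proof -
  assume h: "c \<in> carrier K" "x \<in> carrier R" "y \<in> carrier R"
  then have "teq [(x \<otimes> (c \<odot> \<one>), y)] [(x, (c \<odot> \<one>) \<otimes> y)]"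
    by (intro tens_eq.bal scalar_in_S) simp_all
  then show ?thesis using smult_as_mult_l[OF h(1,3)] smult_as_mult_r[OF h(1,2)] by simp
qed

lemma teq_qbasis_left:
  assumes "c \<in> carrier R" "d \<in> carrier R"
  shows "teq (map (\<lambda>i. (r i \<otimes> ES (s i \<otimes> c), d)) [0..<n]) [(c, d)]"
proof -
  have "teq [(\<Oplus>i\<in>{..<n}. r i \<otimes> ES (s i \<otimes> c), d)] (map (\<lambda>i. (r i \<otimes> ES (s i \<otimes> c), d)) [0..<n])"
    by (rule teq_finsum_lessThan_left) (use assms r_closed s_closed E_closed in auto)
  then show ?thesis using qbasis_expand_right[OF assms(1)] tens_eq.sym by simp
qed

lemma teq_qbasis_right:
  assumes "c \<in> carrier R" "d \<in> carrier R"
  shows "teq (map (\<lambda>i. (c \<otimes> ES (d \<otimes> r i), s i)) [0..<n]) [(c, d)]"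
proof -
  have "teq (map (\<lambda>i. (c \<otimes> ES (d \<otimes> r i), s i)) [0..<n]) (map (\<lambda>i. (c, ES (d \<otimes> r i) \<otimes> s i)) [0..<n])"
  proof (rule teq_map)
    fix i assume "i \<in> set [0..<n]"
    then show "teq [(c \<otimes> ES (d \<otimes> r i), s i)] [(c, ES (d \<otimes> r i) \<otimes> s i)]"
      by (intro tens_eq.bal) (use assms r_closed s_closed E_in_S in auto)
  qed
  moreover have "teq [(c, \<Oplus>i\<in>{..<n}. ES (d \<otimes> r i) \<otimes> s i)] (map (\<lambda>i. (c, ES (d \<otimes> r i) \<otimes> s i)) [0..<n])"
    by (rule teq_finsum_lessThan_right) (use assms r_closed s_closed E_closed in auto)
  ultimately show ?thesis
    using qbasis_expand_left[OF assms(2)] tens_eq.trans[OF _ tens_eq.sym] by simp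
qed

abbreviation "R1 \<equiv> bc R S ES r s n"
abbreviation "bcml \<equiv> bc_mult_list R ES"
abbreviation "one_list \<equiv> map (\<lambda>i. (r i, s i)) [0..<n]"
abbreviation "incl \<equiv> bc_incl R S r s n"
abbreviation "ER \<equiv> bc_E R lam"
abbreviation "x1 \<equiv> bc_x K R S r lam"
abbreviation "y1 \<equiv> bc_y R S s"
abbreviation "smap c xs \<equiv> map (\<lambda>(a, b). (c \<odot> a, b)) xs"

definition incl_list :: "'a \<Rightarrow> ('a \<times> 'a) list" where
  "incl_list a = map (\<lambda>i. (a \<otimes> r i, s i)) [0..<n]"

lemma bcml_Nil [simp]: "bcml [] ys = []"
  by (simp add: bc_mult_list_def)

lemma bcml_Cons [simp]: "bcml ((a, b) # xs) ys = map (\<lambda>(c, d). (a \<otimes> ES (b \<otimes> c), d)) ys @ bcml xs ys"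
  by (simp add: bc_mult_list_def)

lemma bcml_append [simp]: "bcml (xs @ xs') ys = bcml xs ys @ bcml xs' ys"
  by (simp add: bc_mult_list_def)

lemma bcml_single: "bcml xs [(c, d)] = map (\<lambda>(a, b). (a \<otimes> ES (b \<otimes> c), d)) xs"
  by (induction xs) auto

lemma carrier_pairs_bcml: "carrier_pairs xs \<Longrightarrow> carrier_pairs ys \<Longrightarrow> carrier_pairs (bcml xs ys)"
  by (auto simp: bc_mult_list_def carrier_pairs_iff E_closed)

lemma carrier_pairs_incl_list: "a \<in> carrier R \<Longrightarrow> carrier_pairs (incl_list a)"
  by (auto simp: incl_list_def r_closed s_closed)

lemma carrier_pairs_one_list: "carrier_pairs one_list"
  by (auto simp: r_closed s_closed)

lemma carrier_pairs_smap: "carrier_pairs xs \<Longrightarrow> c \<in> carrier K \<Longrightarrow> carrier_pairs (smap c xs)"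
  by (induction xs) auto

lemma incl_list_one: "incl_list \<one> = one_list"
  by (auto simp: incl_list_def r_closed)

lemma R1_carrier: "carrier R1 = tens_carrier R S" by (simp add: bc_def)
lemma R1_mult: "X \<otimes>\<^bsub>R1\<^esub> Y = tclass (bcml (trep X) (trep Y))" by (simp add: bc_def)
lemma R1_add: "X \<oplus>\<^bsub>R1\<^esub> Y = tadd R S X Y" by (simp add: bc_def)
lemma R1_zero: "\<zero>\<^bsub>R1\<^esub> = tclass []" by (simp add: bc_def)
lemma R1_one: "\<one>\<^bsub>R1\<^esub> = tclass one_list" by (simp add: bc_def)
lemma R1_smult: "c \<odot>\<^bsub>R1\<^esub> X = tclass (smap c (trep X))" by (simp add: bc_def)

lemma R1_carrierE:
  assumes "X \<in> carrier R1"
  obtains xs where "carrier_pairs xs" "X = tclass xs"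
  using assms unfolding R1_carrier tens_carrier_iff by blast

lemma R1_tclass_closed: "carrier_pairs xs \<Longrightarrow> tclass xs \<in> carrier R1"
  unfolding R1_carrier by (rule tclass_in_tens_carrier)

lemma teq_bcml_left:
  assumes "teq xs xs'" "carrier_pairs ys"
  shows "teq (bcml xs ys) (bcml xs' ys)"
proof -
  let ?F = "\<lambda>(a, b). map (\<lambda>(c, d). (a \<otimes> ES (b \<otimes> c), d)) ys"
  have "teq (concat (map ?F xs)) (concat (map ?F xs'))"
  proof (rule teq_concat_map_respecting[OF assms(1)])
    fix a a' b assume "a \<in> carrier R" "a' \<in> carrier R" "b \<in> carrier R"
    then show "teq (?F (a \<oplus> a', b)) (?F (a, b) @ ?F (a', b))"
      using teq_map_fst_add[OF assms(2), of "\<lambda>c. a \<otimes> ES (b \<otimes> c)" "\<lambda>c. a' \<otimes> ES (b \<otimes> c)"]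
      by (simp add: E_closed l_distr)
  next
    fix a b b' assume "a \<in> carrier R" "b \<in> carrier R" "b' \<in> carrier R"
    then show "teq (?F (a, b \<oplus> b')) (?F (a, b) @ ?F (a, b'))"
      using teq_map_fst_add[OF assms(2), of "\<lambda>c. a \<otimes> ES (b \<otimes> c)" "\<lambda>c. a \<otimes> ES (b' \<otimes> c)"]
      by (simp add: E_closed E_add l_distr r_distr)
  next
    fix b assume "b \<in> carrier R"
    then show "teq (?F (\<zero>, b)) []"
      using teq_map_fst_zero[OF assms(2), of "\<lambda>c. \<zero> \<otimes> ES (b \<otimes> c)"] by (simp add: E_closed)
  next
    fix a assume "a \<in> carrier R"
    then show "teq (?F (a, \<zero>)) []"
      using teq_map_fst_zero[OF assms(2), of "\<lambda>c. a \<otimes> ES (\<zero> \<otimes> c)"] by (simp add: E_zero)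
  next
    fix a b t assume "a \<in> carrier R" "b \<in> carrier R" "t \<in> S"
    then have eq: "?F (a \<otimes> t, b) = ?F (a, t \<otimes> b)"
      using assms(2) S_carrier by (auto simp: m_assoc E_lmult E_closed carrier_pairs_iff)
    have "carrier_pairs (?F (a, t \<otimes> b))"
      using \<open>a \<in> carrier R\<close> \<open>b \<in> carrier R\<close> \<open>t \<in> S\<close> assms(2) S_carrier
      by (auto simp: E_closed carrier_pairs_iff)
    then show "teq (?F (a \<otimes> t, b)) (?F (a, t \<otimes> b))" unfolding eq by (rule teq_refl)
  qed (use assms(2) in \<open>auto simp: E_closed carrier_pairs_iff\<close>)
  then show ?thesis by (simp add: bc_mult_list_def)
qed

lemma teq_bcml_right:
  assumes "teq ys ys'" "carrier_pairs xs"
  shows "teq (bcml xs ys) (bcml xs ys')"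
proof -
  have "teq (map (\<lambda>(c, d). (a \<otimes> ES (b \<otimes> c), d)) ys) (map (\<lambda>(c, d). (a \<otimes> ES (b \<otimes> c), d)) ys')"
    if "a \<in> carrier R" "b \<in> carrier R" for a b
  proof -
    have "teq (map (\<lambda>(c, d). ((\<lambda>c. a \<otimes> ES (b \<otimes> c)) c, id d)) ys) (map (\<lambda>(c, d). ((\<lambda>c. a \<otimes> ES (b \<otimes> c)) c, id d)) ys')"
      by (rule teq_map_pair[OF assms(1)])
        (use that S_carrier in \<open>auto simp: E_closed E_add E_rmult r_distr m_assoc[symmetric]\<close>)
    then show ?thesis by simp
  qed
  then show ?thesis unfolding bc_mult_list_def
    by (intro teq_concat_map) (use assms(2) in \<open>auto elim: carrier_pairsE\<close>)
qed

lemma R1_mult_tclass: "carrier_pairs xs \<Longrightarrow> carrier_pairs ys \<Longrightarrow> tclass xs \<otimes>\<^bsub>R1\<^esub> tclass ys = tclass (bcml xs ys)"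
  unfolding R1_mult
  by (rule tclass_eq[OF tens_eq.trans[OF teq_bcml_left teq_bcml_right]])
    (auto intro: tens_eq.sym teq_trep carrier_pairs_trep)

lemma R1_add_tclass: "carrier_pairs xs \<Longrightarrow> carrier_pairs ys \<Longrightarrow> tclass xs \<oplus>\<^bsub>R1\<^esub> tclass ys = tclass (xs @ ys)"
  unfolding R1_add by (rule tadd_tclass)

lemma teq_smap: "teq xs ys \<Longrightarrow> c \<in> carrier K \<Longrightarrow> teq (smap c xs) (smap c ys)"
  using teq_map_pair[where f = "\<lambda>a. c \<odot> a" and g = id] smult_mult_left S_carrier
  by (auto simp: Rmod.smult_r_distr)

lemma R1_smult_tclass: "c \<in> carrier K \<Longrightarrow> carrier_pairs xs \<Longrightarrow> c \<odot>\<^bsub>R1\<^esub> tclass xs = tclass (smap c xs)"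
  unfolding R1_smult by (rule tclass_eq[OF teq_smap[OF tens_eq.sym[OF teq_trep]]])

lemma bcml_assoc:
  "carrier_pairs xs \<Longrightarrow> carrier_pairs ys \<Longrightarrow> carrier_pairs zs \<Longrightarrow> bcml (bcml xs ys) zs = bcml xs (bcml ys zs)"
proof (induction xs)
  case (Cons p xs)
  obtain a b where p: "p = (a, b)" "a \<in> carrier R" "b \<in> carrier R" using Cons.prems by (cases p) auto
  have "ES (b \<otimes> (c \<otimes> ES (d \<otimes> e))) = ES (b \<otimes> c) \<otimes> ES (d \<otimes> e)"
    if "c \<in> carrier R" "d \<in> carrier R" "e \<in> carrier R" for c d e
    using that p E_rmult[OF E_in_S, of "d \<otimes> e" "b \<otimes> c"] E_closed by (simp add: m_assoc)
  then have "bcml (map (\<lambda>(c, d). (a \<otimes> ES (b \<otimes> c), d)) ys) zs = map (\<lambda>(c, d). (a \<otimes> ES (b \<otimes> c), d)) (bcml ys zs)"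
    using Cons.prems(2,3) p by (induction ys) (auto simp: m_assoc E_closed carrier_pairs_iff)
  then show ?case using Cons p by simp
qed simp

lemma teq_bcml_incl_left:
  assumes a: "a \<in> carrier R" and ys: "carrier_pairs ys"
  shows "teq (bcml (incl_list a) ys) (map (\<lambda>(c, d). (a \<otimes> c, d)) ys)"
proof -
  let ?g = "\<lambda>i (c, d). ((a \<otimes> r i) \<otimes> ES (s i \<otimes> c), d)"
  have e: "bcml (incl_list a) ys = concat (map (\<lambda>i. map (?g i) ys) [0..<n])"
    by (simp add: incl_list_def bc_mult_list_def comp_def)
  have "teq (concat (map (\<lambda>i. map (?g i) ys) [0..<n])) (concat (map (\<lambda>p. map (\<lambda>i. ?g i p) [0..<n]) ys))"
    by (rule teq_concat_transpose) (use carrier_pairs_bcml[OF carrier_pairs_incl_list[OF a] ys] e in simp)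
  then have "teq (bcml (incl_list a) ys) (concat (map (\<lambda>p. map (\<lambda>i. ?g i p) [0..<n]) ys))"
    using e by simp
  moreover have "teq (concat (map (\<lambda>p. map (\<lambda>i. ?g i p) [0..<n]) ys)) (concat (map (\<lambda>p. [case p of (c, d) \<Rightarrow> (a \<otimes> c, d)]) ys))"
  proof (rule teq_concat_map)
    fix p assume "p \<in> set ys"
    with ys obtain c d where p: "p = (c, d)" "c \<in> carrier R" "d \<in> carrier R" by (rule carrier_pairsE)
    have eq: "map (\<lambda>i. ?g i p) [0..<n] = map (\<lambda>(x, y). (a \<otimes> x, y)) (map (\<lambda>i. (r i \<otimes> ES (s i \<otimes> c), d)) [0..<n])"
      using p a r_closed s_closed E_closed by (auto simp: m_assoc)
    show "teq (map (\<lambda>i. ?g i p) [0..<n]) [case p of (c, d) \<Rightarrow> (a \<otimes> c, d)]"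
      unfolding eq using teq_lmult[OF teq_qbasis_left[OF p(2,3)] a] p(1) by simp
  qed
  ultimately show ?thesis using tens_eq.trans by simp
qed

lemma teq_bcml_incl_right:
  assumes a: "a \<in> carrier R" and ys: "carrier_pairs ys"
  shows "teq (bcml ys (incl_list a)) (map (\<lambda>(c, d). (c, d \<otimes> a)) ys)"
proof -
  have "teq (map (\<lambda>i. (c \<otimes> ES (d \<otimes> (a \<otimes> r i)), s i)) [0..<n]) [(c, d \<otimes> a)]"
    if "c \<in> carrier R" "d \<in> carrier R" for c d
  proof -
    have eq: "map (\<lambda>i. (c \<otimes> ES (d \<otimes> (a \<otimes> r i)), s i)) [0..<n] = map (\<lambda>i. (c \<otimes> ES (d \<otimes> a \<otimes> r i), s i)) [0..<n]"
      using that a r_closed by (simp add: m_assoc)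
    show ?thesis unfolding eq using teq_qbasis_right[of c "d \<otimes> a"] that a by simp
  qed
  then have "teq (concat (map (\<lambda>(c, d). map (\<lambda>i. (c \<otimes> ES (d \<otimes> (a \<otimes> r i)), s i)) [0..<n]) ys))
                 (concat (map (\<lambda>p. [case p of (c, d) \<Rightarrow> (c, d \<otimes> a)]) ys))"
    by (intro teq_concat_map) (use ys in \<open>auto elim!: carrier_pairsE\<close>)
  then show ?thesis by (simp add: incl_list_def bc_mult_list_def comp_def)
qed

lemma teq_bcml_one_left: "carrier_pairs ys \<Longrightarrow> teq (bcml one_list ys) ys"
proof -
  assume ys: "carrier_pairs ys"
  then have "map (\<lambda>(c, d). (\<one> \<otimes> c, d)) ys = ys" by (induction ys) auto
  then show ?thesis using teq_bcml_incl_left[OF one_closed ys] incl_list_one by simp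
qed

lemma teq_bcml_one_right: "carrier_pairs ys \<Longrightarrow> teq (bcml ys one_list) ys"
proof -
  assume ys: "carrier_pairs ys"
  then have "map (\<lambda>(c, d). (c, d \<otimes> \<one>)) ys = ys" by (induction ys) auto
  then show ?thesis using teq_bcml_incl_right[OF one_closed ys] incl_list_one by simp
qed

lemma R1_abelian_group: "abelian_group R1"
proof (rule abelian_groupI)
  fix x y assume "x \<in> carrier R1" "y \<in> carrier R1"
  then obtain xs ys where xs: "carrier_pairs xs" "x = tclass xs" and ys: "carrier_pairs ys" "y = tclass ys"
    by (meson R1_carrierE)
  show "x \<oplus>\<^bsub>R1\<^esub> y \<in> carrier R1" using xs ys R1_add_tclass R1_tclass_closed by simp
  have "teq (xs @ ys) (ys @ xs)" by (rule teq_perm) (use xs ys in auto)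
  then show "x \<oplus>\<^bsub>R1\<^esub> y = y \<oplus>\<^bsub>R1\<^esub> x" using xs ys R1_add_tclass tclass_eq by simp
next
  fix x y z assume "x \<in> carrier R1" "y \<in> carrier R1" "z \<in> carrier R1"
  then show "x \<oplus>\<^bsub>R1\<^esub> y \<oplus>\<^bsub>R1\<^esub> z = x \<oplus>\<^bsub>R1\<^esub> (y \<oplus>\<^bsub>R1\<^esub> z)"
    by (elim R1_carrierE) (simp add: R1_add_tclass)
next
  fix x assume "x \<in> carrier R1"
  then obtain xs where xs: "carrier_pairs xs" "x = tclass xs" by (rule R1_carrierE)
  show "\<zero>\<^bsub>R1\<^esub> \<oplus>\<^bsub>R1\<^esub> x = x" using xs R1_add_tclass R1_zero by simp
  let ?ys = "map (\<lambda>(a, b). (\<ominus> a, b)) xs"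
  have ys: "carrier_pairs ?ys" using xs(1) by (induction xs) auto
  have "tclass ?ys \<oplus>\<^bsub>R1\<^esub> x = \<zero>\<^bsub>R1\<^esub>"
    using R1_add_tclass[OF ys xs(1)] xs(2) R1_zero tclass_eq[OF teq_uminus_cancel[OF xs(1)]] by simp
  then show "\<exists>y\<in>carrier R1. y \<oplus>\<^bsub>R1\<^esub> x = \<zero>\<^bsub>R1\<^esub>" using R1_tclass_closed[OF ys] by blast
qed (use R1_zero R1_tclass_closed in simp)

lemma R1_monoid: "monoid R1"
proof (rule monoidI)
  fix x y assume "x \<in> carrier R1" "y \<in> carrier R1"
  then show "x \<otimes>\<^bsub>R1\<^esub> y \<in> carrier R1"
    by (elim R1_carrierE) (simp add: R1_mult_tclass R1_tclass_closed carrier_pairs_bcml)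
next
  fix x y z assume "x \<in> carrier R1" "y \<in> carrier R1" "z \<in> carrier R1"
  then show "x \<otimes>\<^bsub>R1\<^esub> y \<otimes>\<^bsub>R1\<^esub> z = x \<otimes>\<^bsub>R1\<^esub> (y \<otimes>\<^bsub>R1\<^esub> z)"
    by (elim R1_carrierE) (simp add: R1_mult_tclass carrier_pairs_bcml bcml_assoc)
next
  fix x assume "x \<in> carrier R1"
  then obtain xs where xs: "carrier_pairs xs" "x = tclass xs" by (rule R1_carrierE)
  show "\<one>\<^bsub>R1\<^esub> \<otimes>\<^bsub>R1\<^esub> x = x"
    using xs R1_mult_tclass[OF carrier_pairs_one_list xs(1)] R1_one tclass_eq[OF teq_bcml_one_left[OF xs(1)]] by simp
  show "x \<otimes>\<^bsub>R1\<^esub> \<one>\<^bsub>R1\<^esub> = x"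
    using xs R1_mult_tclass[OF xs(1) carrier_pairs_one_list] R1_one tclass_eq[OF teq_bcml_one_right[OF xs(1)]] by simp
qed (use R1_one R1_tclass_closed carrier_pairs_one_list in simp)

lemma count_list_bcml_append: "count_list (bcml zs (xs @ ys)) q = count_list (bcml zs xs @ bcml zs ys) q"
proof (induction zs)
  case (Cons p zs)
  then show ?case by (cases p) simp
qed simp

lemma R1_ring: "ring R1"
proof (rule ringI[OF R1_abelian_group R1_monoid])
  fix x y z assume "x \<in> carrier R1" "y \<in> carrier R1" "z \<in> carrier R1"
  then obtain xs ys zs where xs: "carrier_pairs xs" "x = tclass xs" and ys: "carrier_pairs ys" "y = tclass ys"
    and zs: "carrier_pairs zs" "z = tclass zs"
    by (meson R1_carrierE)
  show "(x \<oplus>\<^bsub>R1\<^esub> y) \<otimes>\<^bsub>R1\<^esub> z = x \<otimes>\<^bsub>R1\<^esub> z \<oplus>\<^bsub>R1\<^esub> y \<otimes>\<^bsub>R1\<^esub> z"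
    using xs ys zs R1_mult_tclass R1_add_tclass carrier_pairs_bcml by simp
  have "teq (bcml zs (xs @ ys)) (bcml zs xs @ bcml zs ys)"
    by (rule teq_perm) (use xs ys zs carrier_pairs_bcml count_list_bcml_append in simp_all)
  then show "z \<otimes>\<^bsub>R1\<^esub> (x \<oplus>\<^bsub>R1\<^esub> y) = z \<otimes>\<^bsub>R1\<^esub> x \<oplus>\<^bsub>R1\<^esub> z \<otimes>\<^bsub>R1\<^esub> y"
    using xs ys zs R1_mult_tclass R1_add_tclass carrier_pairs_bcml tclass_eq by simp
qed

sublocale R1: ring R1 by (rule R1_ring)

lemma teq_smap_add:
  "carrier_pairs xs \<Longrightarrow> a \<in> carrier K \<Longrightarrow> b \<in> carrier K \<Longrightarrow> teq (smap (a \<oplus>\<^bsub>K\<^esub> b) xs) (smap a xs @ smap b xs)"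
  using teq_map_fst_add[of xs "\<lambda>c. a \<odot> c" "\<lambda>c. b \<odot> c" "\<lambda>c. (a \<oplus>\<^bsub>K\<^esub> b) \<odot> c"]
  by (simp add: Rmod.smult_l_distr)

lemma smap_mult: "carrier_pairs xs \<Longrightarrow> a \<in> carrier K \<Longrightarrow> b \<in> carrier K \<Longrightarrow> smap (a \<otimes>\<^bsub>K\<^esub> b) xs = smap a (smap b xs)"
  by (induction xs) (auto simp: Rmod.smult_assoc1)

lemma R1_module: "module K R1"
proof (rule moduleI)
  show "cring K" by (rule domain.axioms(1)[OF field.axioms(1)[OF field_K]])
  show "abelian_group R1" by (rule R1.abelian_group_axioms)
next
  fix a x assume "a \<in> carrier K" "x \<in> carrier R1"
  then show "a \<odot>\<^bsub>R1\<^esub> x \<in> carrier R1"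
    by (auto elim!: R1_carrierE intro!: R1_tclass_closed carrier_pairs_smap simp: R1_smult_tclass)
next
  fix a b x assume ab: "a \<in> carrier K" "b \<in> carrier K" and "x \<in> carrier R1"
  then obtain xs where xs: "carrier_pairs xs" "x = tclass xs" by (meson R1_carrierE)
  show "(a \<oplus>\<^bsub>K\<^esub> b) \<odot>\<^bsub>R1\<^esub> x = a \<odot>\<^bsub>R1\<^esub> x \<oplus>\<^bsub>R1\<^esub> b \<odot>\<^bsub>R1\<^esub> x"
    using xs ab teq_smap_add R1_smult_tclass R1_add_tclass carrier_pairs_smap tclass_eq by simp
  have "(a \<otimes>\<^bsub>K\<^esub> b) \<odot>\<^bsub>R1\<^esub> x = tclass (smap (a \<otimes>\<^bsub>K\<^esub> b) xs)"
    using R1_smult_tclass[OF _ xs(1)] ab xs(2) by simp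
  also have "\<dots> = tclass (smap a (smap b xs))" by (simp only: smap_mult[OF xs(1) ab])
  also have "\<dots> = a \<odot>\<^bsub>R1\<^esub> (b \<odot>\<^bsub>R1\<^esub> x)"
    using R1_smult_tclass[OF ab(1) carrier_pairs_smap[OF xs(1) ab(2)]] R1_smult_tclass[OF ab(2) xs(1)] xs(2) by simp
  finally show "(a \<otimes>\<^bsub>K\<^esub> b) \<odot>\<^bsub>R1\<^esub> x = a \<odot>\<^bsub>R1\<^esub> (b \<odot>\<^bsub>R1\<^esub> x)" .
next
  fix a x y assume a: "a \<in> carrier K" and "x \<in> carrier R1" "y \<in> carrier R1"
  then obtain xs ys where xs: "carrier_pairs xs" "x = tclass xs" and ys: "carrier_pairs ys" "y = tclass ys"
    by (meson R1_carrierE)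
  show "a \<odot>\<^bsub>R1\<^esub> (x \<oplus>\<^bsub>R1\<^esub> y) = a \<odot>\<^bsub>R1\<^esub> x \<oplus>\<^bsub>R1\<^esub> a \<odot>\<^bsub>R1\<^esub> y"
    using R1_add_tclass[OF xs(1) ys(1)] R1_add_tclass[OF carrier_pairs_smap[OF xs(1) a] carrier_pairs_smap[OF ys(1) a]]
      R1_smult_tclass[OF a] xs ys by simp
next
  fix x assume "x \<in> carrier R1"
  then obtain xs where xs: "carrier_pairs xs" "x = tclass xs" by (rule R1_carrierE)
  have "smap \<one>\<^bsub>K\<^esub> xs = xs" using xs(1) by (induction xs) auto
  then show "\<one>\<^bsub>K\<^esub> \<odot>\<^bsub>R1\<^esub> x = x" using xs R1_smult_tclass by simp
qed

lemma smap_bcml_left: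
  "carrier_pairs xs \<Longrightarrow> carrier_pairs ys \<Longrightarrow> c \<in> carrier K \<Longrightarrow> smap c (bcml xs ys) = bcml (smap c xs) ys"
  by (induction xs) (auto simp: smult_mult_left E_closed carrier_pairs_iff)

lemma smap_bcml_right:
  "carrier_pairs xs \<Longrightarrow> carrier_pairs ys \<Longrightarrow> c \<in> carrier K \<Longrightarrow> smap c (bcml xs ys) = bcml xs (smap c ys)"
proof (induction xs)
  case (Cons p xs)
  then show ?case using mult_E_mult_smult by (cases p) (auto simp: carrier_pairs_iff)
qed simp

lemma R1_k_algebra: "k_algebra K R1"
  unfolding k_algebra_def
proof (intro conjI ballI)
  show "field K" "ring R1" "module K R1" by (rule field_K, rule R1_ring, rule R1_module)
next
  fix c x y assume c: "c \<in> carrier K" and "x \<in> carrier R1" "y \<in> carrier R1"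
  then obtain xs ys where xs: "carrier_pairs xs" "x = tclass xs" and ys: "carrier_pairs ys" "y = tclass ys"
    by (meson R1_carrierE)
  have xy: "c \<odot>\<^bsub>R1\<^esub> (x \<otimes>\<^bsub>R1\<^esub> y) = tclass (smap c (bcml xs ys))"
    using R1_mult_tclass[OF xs(1) ys(1)] R1_smult_tclass[OF c carrier_pairs_bcml[OF xs(1) ys(1)]] xs ys by simp
  show "c \<odot>\<^bsub>R1\<^esub> (x \<otimes>\<^bsub>R1\<^esub> y) = c \<odot>\<^bsub>R1\<^esub> x \<otimes>\<^bsub>R1\<^esub> y"
    using xy smap_bcml_left[OF xs(1) ys(1) c] R1_smult_tclass[OF c xs(1)]
      R1_mult_tclass[OF carrier_pairs_smap[OF xs(1) c] ys(1)] xs ys by simp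
  show "c \<odot>\<^bsub>R1\<^esub> (x \<otimes>\<^bsub>R1\<^esub> y) = x \<otimes>\<^bsub>R1\<^esub> (c \<odot>\<^bsub>R1\<^esub> y)"
    using xy smap_bcml_right[OF xs(1) ys(1) c] R1_smult_tclass[OF c ys(1)]
      R1_mult_tclass[OF xs(1) carrier_pairs_smap[OF ys(1) c]] xs ys by simp
qed

end

lemma scalars_subset_centralizer:
  assumes "k_algebra K D" "T \<subseteq> carrier D"
  shows "scalars K D \<subseteq> centralizer D T"
proof
  fix x assume "x \<in> scalars K D"
  then obtain c where c: "c \<in> carrier K" "x = c \<odot>\<^bsub>D\<^esub> \<one>\<^bsub>D\<^esub>" unfolding scalars_def by blast
  interpret D: ring D using assms(1) unfolding k_algebra_def by auto
  interpret module K D using assms(1) unfolding k_algebra_def by auto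
  have "(c \<odot>\<^bsub>D\<^esub> \<one>\<^bsub>D\<^esub>) \<otimes>\<^bsub>D\<^esub> y = y \<otimes>\<^bsub>D\<^esub> (c \<odot>\<^bsub>D\<^esub> \<one>\<^bsub>D\<^esub>)" if "y \<in> carrier D" for y
    using assms(1) c(1) that D.one_closed unfolding k_algebra_def by (metis D.l_one D.r_one)
  then show "x \<in> centralizer D T" using c assms(2) unfolding centralizer_def by auto
qed

context strongly_separable_ext
begin

lemma incl_tclass: "incl a = tclass (incl_list a)"
  by (simp add: bc_incl_def incl_list_def)

lemma R1_incl_mult_tclass:
  "a \<in> carrier R \<Longrightarrow> carrier_pairs xs \<Longrightarrow> incl a \<otimes>\<^bsub>R1\<^esub> tclass xs = tclass (map (\<lambda>(c, d). (a \<otimes> c, d)) xs)"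
  unfolding incl_tclass by (simp add: R1_mult_tclass carrier_pairs_incl_list tclass_eq teq_bcml_incl_left)

lemma R1_tclass_mult_incl:
  "a \<in> carrier R \<Longrightarrow> carrier_pairs xs \<Longrightarrow> tclass xs \<otimes>\<^bsub>R1\<^esub> incl a = tclass (map (\<lambda>(c, d). (c, d \<otimes> a)) xs)"
  unfolding incl_tclass by (simp add: R1_mult_tclass carrier_pairs_incl_list tclass_eq teq_bcml_incl_right)

lemma incl_eq_lmult_one: "incl a = tclass (map (\<lambda>(c, d). (a \<otimes> c, d)) one_list)"
  by (simp add: bc_incl_def comp_def)

lemma incl_closed: "a \<in> carrier R \<Longrightarrow> incl a \<in> carrier R1"
  unfolding incl_tclass by (rule R1_tclass_closed[OF carrier_pairs_incl_list])

lemma incl_mult: "a \<in> carrier R \<Longrightarrow> b \<in> carrier R \<Longrightarrow> incl a \<otimes>\<^bsub>R1\<^esub> incl b = incl (a \<otimes> b)"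
proof -
  assume ab: "a \<in> carrier R" "b \<in> carrier R"
  have "incl a \<otimes>\<^bsub>R1\<^esub> incl b = tclass (map (\<lambda>(c, d). (a \<otimes> c, d)) (incl_list b))"
    unfolding incl_tclass[of b] using ab by (intro R1_incl_mult_tclass carrier_pairs_incl_list)
  also have "map (\<lambda>(c, d). (a \<otimes> c, d)) (incl_list b) = incl_list (a \<otimes> b)"
    using ab by (auto simp: incl_list_def m_assoc r_closed)
  finally show ?thesis by (simp add: incl_tclass)
qed

lemma incl_add: "a \<in> carrier R \<Longrightarrow> b \<in> carrier R \<Longrightarrow> incl (a \<oplus> b) = incl a \<oplus>\<^bsub>R1\<^esub> incl b"
  using teq_map_fst_add[OF carrier_pairs_one_list, of "\<lambda>c. a \<otimes> c" "\<lambda>c. b \<otimes> c" "\<lambda>c. (a \<oplus> b) \<otimes> c"]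
  by (simp add: incl_eq_lmult_one R1_add_tclass tclass_eq l_distr r_closed s_closed)

lemma incl_one: "incl \<one> = \<one>\<^bsub>R1\<^esub>"
  unfolding incl_tclass incl_list_one R1_one ..

lemma incl_zero: "incl \<zero> = \<zero>\<^bsub>R1\<^esub>"
  using teq_map_fst_zero[OF carrier_pairs_one_list, of "\<lambda>c. \<zero> \<otimes> c"]
  by (simp add: incl_eq_lmult_one R1_zero tclass_eq)

lemma incl_neg: "a \<in> carrier R \<Longrightarrow> incl (\<ominus> a) = \<ominus>\<^bsub>R1\<^esub> incl a"
  using incl_add[of "\<ominus> a" a] incl_zero incl_closed R1.minus_equality by (simp add: l_neg)

lemma incl_smult: "c \<in> carrier K \<Longrightarrow> a \<in> carrier R \<Longrightarrow> incl (c \<odot> a) = c \<odot>\<^bsub>R1\<^esub> incl a"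
proof -
  assume "c \<in> carrier K" "a \<in> carrier R"
  moreover have "smap c (incl_list a) = incl_list (c \<odot> a)"
    using calculation by (auto simp: incl_list_def smult_mult_left r_closed)
  ultimately show ?thesis by (simp add: incl_tclass R1_smult_tclass carrier_pairs_incl_list)
qed

lemma ER_tclass: "carrier_pairs xs \<Longrightarrow> ER (tclass xs) = lam \<odot> lmultsum R xs"
  unfolding bc_E_def using lmultsum_teq[OF teq_trep] by metis

lemma ER_closed: "X \<in> carrier R1 \<Longrightarrow> ER X \<in> carrier R"
  by (erule R1_carrierE) (simp add: ER_tclass lmultsum_closed lamK)

lemma ER_add: "X \<in> carrier R1 \<Longrightarrow> Y \<in> carrier R1 \<Longrightarrow> ER (X \<oplus>\<^bsub>R1\<^esub> Y) = ER X \<oplus> ER Y"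
  by (elim R1_carrierE) (simp add: R1_add_tclass ER_tclass lmultsum_append Rmod.smult_r_distr lamK lmultsum_closed)

lemma ER_lmult:
  assumes a: "a \<in> carrier R" and "X \<in> carrier R1"
  shows "ER (incl a \<otimes>\<^bsub>R1\<^esub> X) = a \<otimes> ER X"
proof -
  obtain xs where xs: "carrier_pairs xs" "X = tclass xs" using assms(2) by (rule R1_carrierE)
  have "carrier_pairs (map (\<lambda>(c, d). (a \<otimes> c, d)) xs)" using xs(1) a by (auto simp: carrier_pairs_iff)
  then show ?thesis
    using ER_tclass xs R1_incl_mult_tclass[OF a xs(1)] lmultsum_lmult[OF xs(1) a]
      smult_mult_right[OF lamK a lmultsum_closed[OF xs(1)]] by simp
qed

lemma ER_rmult:
  assumes a: "a \<in> carrier R" and "X \<in> carrier R1"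
  shows "ER (X \<otimes>\<^bsub>R1\<^esub> incl a) = ER X \<otimes> a"
proof -
  obtain xs where xs: "carrier_pairs xs" "X = tclass xs" using assms(2) by (rule R1_carrierE)
  have "carrier_pairs (map (\<lambda>(c, d). (c, d \<otimes> a)) xs)" using xs(1) a by (auto simp: carrier_pairs_iff)
  then show ?thesis
    using ER_tclass xs R1_tclass_mult_incl[OF a xs(1)] lmultsum_rmult[OF xs(1) a]
      smult_mult_left[OF lamK lmultsum_closed[OF xs(1)] a] by simp
qed

abbreviation "E1 \<equiv> \<lambda>X. incl (ER X)"

lemma E1_bimodule: "bimodule_map R1 (incl ` carrier R) E1"
  unfolding bimodule_map_def
proof (intro conjI ballI)
  fix m assume "m \<in> carrier R1"
  then show "E1 m \<in> incl ` carrier R" using ER_closed by blast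
next
  fix m m' assume "m \<in> carrier R1" "m' \<in> carrier R1"
  then show "E1 (m \<oplus>\<^bsub>R1\<^esub> m') = E1 m \<oplus>\<^bsub>R1\<^esub> E1 m'" by (simp add: ER_add incl_add ER_closed)
next
  fix t m assume "t \<in> incl ` carrier R" and m: "m \<in> carrier R1"
  then obtain a where a: "a \<in> carrier R" "t = incl a" by blast
  show "E1 (t \<otimes>\<^bsub>R1\<^esub> m) = t \<otimes>\<^bsub>R1\<^esub> E1 m" using a m by (simp add: ER_lmult incl_mult ER_closed)
  show "E1 (m \<otimes>\<^bsub>R1\<^esub> t) = E1 m \<otimes>\<^bsub>R1\<^esub> t" using a m by (simp add: ER_rmult incl_mult ER_closed)
qed

lemma E1_one: "E1 \<one>\<^bsub>R1\<^esub> = \<one>\<^bsub>R1\<^esub>"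
proof -
  have "lmultsum R one_list = (\<Oplus>i\<in>{..<n}. r i \<otimes> s i)"
    using lmultsum_map_finsum[of "[0..<n]" r s] r_closed s_closed by (simp add: atLeast0LessThan)
  then show ?thesis using ER_tclass[OF carrier_pairs_one_list] lam_cancel sum_r_s incl_one R1_one by simp
qed

lemma R1_subalgebra: "k_subalgebra K (incl ` carrier R) R1"
  unfolding k_subalgebra_def
proof (intro conjI ballI)
  show "subring (incl ` carrier R) R1"
  proof (rule R1.subringI)
    show "incl ` carrier R \<subseteq> carrier R1" using incl_closed by auto
    show "\<one>\<^bsub>R1\<^esub> \<in> incl ` carrier R" using incl_one by (metis image_eqI one_closed)
  next
    fix h assume "h \<in> incl ` carrier R"
    then show "\<ominus>\<^bsub>R1\<^esub> h \<in> incl ` carrier R" using incl_neg by auto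
  next
    fix h1 h2 assume "h1 \<in> incl ` carrier R" "h2 \<in> incl ` carrier R"
    then obtain a b where ab: "a \<in> carrier R" "b \<in> carrier R" "h1 = incl a" "h2 = incl b" by blast
    then have "h1 \<otimes>\<^bsub>R1\<^esub> h2 = incl (a \<otimes> b)" "h1 \<oplus>\<^bsub>R1\<^esub> h2 = incl (a \<oplus> b)"
      using incl_mult incl_add by simp_all
    then show "h1 \<otimes>\<^bsub>R1\<^esub> h2 \<in> incl ` carrier R" "h1 \<oplus>\<^bsub>R1\<^esub> h2 \<in> incl ` carrier R"
      using ab by auto
  qed
next
  fix c x assume "c \<in> carrier K" "x \<in> incl ` carrier R"
  then show "c \<odot>\<^bsub>R1\<^esub> x \<in> incl ` carrier R" using incl_smult by auto
qed

definition lcontract :: "('a \<times> 'a) list \<Rightarrow> 'a \<Rightarrow> 'a" where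
  "lcontract xs u = foldr (\<lambda>p acc. fst p \<otimes> ES (snd p \<otimes> u) \<oplus> acc) xs \<zero>"

definition rcontract :: "'a \<Rightarrow> ('a \<times> 'a) list \<Rightarrow> 'a" where
  "rcontract u xs = foldr (\<lambda>p acc. ES (u \<otimes> fst p) \<otimes> snd p \<oplus> acc) xs \<zero>"

lemma lcontract_closed: "carrier_pairs xs \<Longrightarrow> u \<in> carrier R \<Longrightarrow> lcontract xs u \<in> carrier R"
  unfolding lcontract_def by (rule foldr_add_closed) (auto simp: E_closed carrier_pairs_def)

lemma rcontract_closed: "u \<in> carrier R \<Longrightarrow> carrier_pairs xs \<Longrightarrow> rcontract u xs \<in> carrier R"
  unfolding rcontract_def by (rule foldr_add_closed) (auto simp: E_closed carrier_pairs_def)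

lemma lcontract_smult:
  "carrier_pairs xs \<Longrightarrow> c \<in> carrier K \<Longrightarrow> u \<in> carrier R \<Longrightarrow> lcontract xs (c \<odot> u) = c \<odot> lcontract xs u"
proof (induction xs)
  case (Cons p xs)
  obtain a b where p: "p = (a, b)" "a \<in> carrier R" "b \<in> carrier R" using Cons.prems(1) by (cases p) auto
  have "lcontract xs u \<in> carrier R" using Cons.prems lcontract_closed by simp
  then show ?case
    using Cons p mult_E_mult_smult[of c a b u] by (simp add: lcontract_def Rmod.smult_r_distr E_closed)
qed (simp add: lcontract_def)

lemma lcontract_rmult:
  "carrier_pairs xs \<Longrightarrow> u \<in> carrier R \<Longrightarrow> t \<in> S \<Longrightarrow> lcontract xs (u \<otimes> t) = lcontract xs u \<otimes> t"
proof (induction xs)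
  case (Cons p xs)
  obtain a b where p: "p = (a, b)" "a \<in> carrier R" "b \<in> carrier R" using Cons.prems(1) by (cases p) auto
  have t: "t \<in> carrier R" using Cons.prems(3) S_carrier by simp
  have "a \<otimes> ES (b \<otimes> (u \<otimes> t)) = a \<otimes> ES (b \<otimes> u) \<otimes> t"
    using p Cons.prems t E_rmult[OF Cons.prems(3), of "b \<otimes> u"] E_closed by (simp add: m_assoc)
  moreover have "lcontract xs u \<in> carrier R" using Cons.prems lcontract_closed by simp
  ultimately show ?case using Cons p t by (simp add: lcontract_def l_distr E_closed)
qed (simp add: lcontract_def S_carrier)

lemma R1_mult_pair_one:
  assumes "carrier_pairs xs" "u \<in> carrier R"
  shows "tclass xs \<otimes>\<^bsub>R1\<^esub> tclass [(u, \<one>)] = tclass [(lcontract xs u, \<one>)]"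
proof -
  have "teq [(lcontract xs u, \<one>)] (map (\<lambda>p. (fst p \<otimes> ES (snd p \<otimes> u), \<one>)) xs)"
    unfolding lcontract_def by (rule teq_foldr_left) (use assms in \<open>auto simp: E_closed carrier_pairs_def\<close>)
  then have "tclass (map (\<lambda>p. (fst p \<otimes> ES (snd p \<otimes> u), \<one>)) xs) = tclass [(lcontract xs u, \<one>)]"
    by (rule tclass_eq[OF tens_eq.sym])
  then show ?thesis using assms by (simp add: R1_mult_tclass bcml_single case_prod_unfold)
qed

lemma R1_pair_one_mult:
  assumes "u \<in> carrier R" "carrier_pairs xs"
  shows "tclass [(\<one>, u)] \<otimes>\<^bsub>R1\<^esub> tclass xs = tclass [(\<one>, rcontract u xs)]"
proof -
  have "teq (map (\<lambda>p. (\<one> \<otimes> ES (u \<otimes> fst p), snd p)) xs) (map (\<lambda>p. (\<one>, ES (u \<otimes> fst p) \<otimes> snd p)) xs)"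
  proof (rule teq_map)
    fix p assume "p \<in> set xs"
    with assms(2) obtain a b where "p = (a, b)" "a \<in> carrier R" "b \<in> carrier R" by (rule carrier_pairsE)
    then show "teq [(\<one> \<otimes> ES (u \<otimes> fst p), snd p)] [(\<one>, ES (u \<otimes> fst p) \<otimes> snd p)]"
      using assms(1) tens_eq.bal[of \<one> R b "ES (u \<otimes> a)" S] E_in_S by simp
  qed
  moreover have "teq [(\<one>, rcontract u xs)] (map (\<lambda>p. (\<one>, ES (u \<otimes> fst p) \<otimes> snd p)) xs)"
    unfolding rcontract_def by (rule teq_foldr_right) (use assms in \<open>auto simp: E_closed carrier_pairs_def\<close>)
  ultimately have "tclass (map (\<lambda>p. (\<one> \<otimes> ES (u \<otimes> fst p), snd p)) xs) = tclass [(\<one>, rcontract u xs)]"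
    by (rule tclass_eq[OF tens_eq.trans[OF _ tens_eq.sym]])
  then show ?thesis using assms by (simp add: R1_mult_tclass case_prod_unfold)
qed

lemma teq_expand_lcontract:
  assumes xs: "carrier_pairs xs"
  shows "teq (map (\<lambda>i. (lcontract xs (r i), s i)) [0..<n]) xs"
proof -
  let ?g = "\<lambda>i p. (fst p \<otimes> ES (snd p \<otimes> r i), s i)"
  have "teq [(lcontract xs (r i), s i)] (map (?g i) xs)" if "i < n" for i
    unfolding lcontract_def by (rule teq_foldr_left) (use xs that r_closed s_closed E_closed in \<open>auto simp: carrier_pairs_def\<close>)
  then have "teq (concat (map (\<lambda>i. [(lcontract xs (r i), s i)]) [0..<n])) (concat (map (\<lambda>i. map (?g i) xs) [0..<n]))"
    by (intro teq_concat_map) simp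
  then have "teq (map (\<lambda>i. (lcontract xs (r i), s i)) [0..<n]) (concat (map (\<lambda>i. map (?g i) xs) [0..<n]))"
    by simp
  also have "teq (concat (map (\<lambda>i. map (?g i) xs) [0..<n])) (concat (map (\<lambda>p. map (\<lambda>i. ?g i p) [0..<n]) xs))"
    by (rule teq_concat_transpose) (use xs r_closed s_closed E_closed in \<open>auto simp: carrier_pairs_def\<close>)
  also have "teq (concat (map (\<lambda>p. map (\<lambda>i. ?g i p) [0..<n]) xs)) (concat (map (\<lambda>p. [p]) xs))"
  proof (rule teq_concat_map)
    fix p assume "p \<in> set xs"
    with xs obtain a b where "p = (a, b)" "a \<in> carrier R" "b \<in> carrier R" by (rule carrier_pairsE)
    then show "teq (map (\<lambda>i. ?g i p) [0..<n]) [p]" using teq_qbasis_right[of a b] by simp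
  qed
  finally show ?thesis by simp
qed

lemma teq_expand_rcontract:
  assumes xs: "carrier_pairs xs"
  shows "teq (map (\<lambda>i. (r i, rcontract (s i) xs)) [0..<n]) xs"
proof -
  let ?g = "\<lambda>i p. (r i \<otimes> ES (s i \<otimes> fst p), snd p)"
  have "teq [(r i, rcontract (s i) xs)] (map (?g i) xs)" if "i < n" for i
  proof -
    have "teq [(r i, rcontract (s i) xs)] (map (\<lambda>p. (r i, ES (s i \<otimes> fst p) \<otimes> snd p)) xs)"
      unfolding rcontract_def by (rule teq_foldr_right) (use xs that r_closed s_closed E_closed in \<open>auto simp: carrier_pairs_def\<close>)
    moreover have "teq (map (?g i) xs) (map (\<lambda>p. (r i, ES (s i \<otimes> fst p) \<otimes> snd p)) xs)"
    proof (rule teq_map)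
      fix p assume "p \<in> set xs"
      with xs obtain a b where "p = (a, b)" "a \<in> carrier R" "b \<in> carrier R" by (rule carrier_pairsE)
      then show "teq [?g i p] [(r i, ES (s i \<otimes> fst p) \<otimes> snd p)]"
        using that r_closed s_closed tens_eq.bal[of "r i" R b "ES (s i \<otimes> a)" S] E_in_S by simp
    qed
    ultimately show ?thesis by (rule tens_eq.trans[OF _ tens_eq.sym])
  qed
  then have "teq (concat (map (\<lambda>i. [(r i, rcontract (s i) xs)]) [0..<n])) (concat (map (\<lambda>i. map (?g i) xs) [0..<n]))"
    by (intro teq_concat_map) simp
  then have "teq (map (\<lambda>i. (r i, rcontract (s i) xs)) [0..<n]) (concat (map (\<lambda>i. map (?g i) xs) [0..<n]))"
    by simp
  also have "teq (concat (map (\<lambda>i. map (?g i) xs) [0..<n])) (concat (map (\<lambda>p. map (\<lambda>i. ?g i p) [0..<n]) xs))"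
    by (rule teq_concat_transpose) (use xs r_closed s_closed E_closed in \<open>auto simp: carrier_pairs_def\<close>)
  also have "teq (concat (map (\<lambda>p. map (\<lambda>i. ?g i p) [0..<n]) xs)) (concat (map (\<lambda>p. [p]) xs))"
  proof (rule teq_concat_map)
    fix p assume "p \<in> set xs"
    with xs obtain a b where "p = (a, b)" "a \<in> carrier R" "b \<in> carrier R" by (rule carrier_pairsE)
    then show "teq (map (\<lambda>i. ?g i p) [0..<n]) [p]" using teq_qbasis_left[of a b] by simp
  qed
  finally show ?thesis by simp
qed

lemma R1_finsum_tclass_list:
  "distinct l \<Longrightarrow> (\<And>i. i \<in> set l \<Longrightarrow> carrier_pairs (L i)) \<Longrightarrow>
   finsum R1 (\<lambda>i. tclass (L i)) (set l) = tclass (concat (map L l))"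
proof (induction l)
  case Nil
  then show ?case by (simp add: R1_zero)
next
  case (Cons a l)
  have "finsum R1 (\<lambda>i. tclass (L i)) (set (a # l)) = tclass (L a) \<oplus>\<^bsub>R1\<^esub> finsum R1 (\<lambda>i. tclass (L i)) (set l)"
    by (simp, rule R1.finsum_insert) (use Cons.prems R1_tclass_closed in auto)
  with Cons show ?case by (simp add: R1_add_tclass)
qed

lemma R1_finsum_pairs:
  "(\<And>i. i < n \<Longrightarrow> f i \<in> carrier R \<and> g i \<in> carrier R) \<Longrightarrow>
   (\<Oplus>\<^bsub>R1\<^esub>i\<in>{..<n}. tclass [(f i, g i)]) = tclass (map (\<lambda>i. (f i, g i)) [0..<n])"
  using R1_finsum_tclass_list[of "[0..<n]" "\<lambda>i. [(f i, g i)]"] by (simp add: atLeast0LessThan)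

lemma R1_tclass_pair_closed: "a \<in> carrier R \<Longrightarrow> b \<in> carrier R \<Longrightarrow> tclass [(a, b)] \<in> carrier R1"
  by (simp add: R1_tclass_closed)

lemma x1_tclass: "x1 i = tclass [(inv\<^bsub>K\<^esub> lam \<odot> r i, \<one>)]"
  by (simp add: bc_x_def)

lemma y1_tclass: "y1 i = tclass [(\<one>, s i)]"
  by (simp add: bc_y_def)

lemma x1_closed: "i < n \<Longrightarrow> x1 i \<in> carrier R1"
  unfolding x1_tclass using inv_lamK r_closed by (simp add: R1_tclass_closed)

lemma y1_closed: "i < n \<Longrightarrow> y1 i \<in> carrier R1"
  unfolding y1_tclass using s_closed by (simp add: R1_tclass_closed)

lemma R1_qbasis_left: "X \<in> carrier R1 \<Longrightarrow> (\<Oplus>\<^bsub>R1\<^esub>i\<in>{..<n}. E1 (X \<otimes>\<^bsub>R1\<^esub> x1 i) \<otimes>\<^bsub>R1\<^esub> y1 i) = X"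
proof (erule R1_carrierE)
  fix xs assume xs: "carrier_pairs xs" and X: "X = tclass xs"
  have "E1 (X \<otimes>\<^bsub>R1\<^esub> x1 i) \<otimes>\<^bsub>R1\<^esub> y1 i = tclass [(lcontract xs (r i), s i)]" if i: "i < n" for i
  proof -
    have "ER (X \<otimes>\<^bsub>R1\<^esub> x1 i) = lcontract xs (r i)"
      using i xs inv_lamK r_closed lcontract_closed
      by (simp add: X x1_tclass R1_mult_pair_one ER_tclass lcontract_smult lam_cancel)
    then show ?thesis
      using i xs r_closed s_closed lcontract_closed by (simp add: y1_tclass R1_incl_mult_tclass)
  qed
  then have "(\<Oplus>\<^bsub>R1\<^esub>i\<in>{..<n}. E1 (X \<otimes>\<^bsub>R1\<^esub> x1 i) \<otimes>\<^bsub>R1\<^esub> y1 i) = (\<Oplus>\<^bsub>R1\<^esub>i\<in>{..<n}. tclass [(lcontract xs (r i), s i)])"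
    using xs r_closed s_closed lcontract_closed by (intro R1.finsum_cong) (auto intro!: R1_tclass_pair_closed)
  also have "\<dots> = tclass (map (\<lambda>i. (lcontract xs (r i), s i)) [0..<n])"
    using xs r_closed s_closed lcontract_closed by (intro R1_finsum_pairs) auto
  also have "\<dots> = X" unfolding X by (rule tclass_eq[OF teq_expand_lcontract[OF xs]])
  finally show ?thesis .
qed

lemma R1_qbasis_right: "X \<in> carrier R1 \<Longrightarrow> (\<Oplus>\<^bsub>R1\<^esub>i\<in>{..<n}. x1 i \<otimes>\<^bsub>R1\<^esub> E1 (y1 i \<otimes>\<^bsub>R1\<^esub> X)) = X"
proof (erule R1_carrierE)
  fix xs assume xs: "carrier_pairs xs" and X: "X = tclass xs"
  have "x1 i \<otimes>\<^bsub>R1\<^esub> E1 (y1 i \<otimes>\<^bsub>R1\<^esub> X) = tclass [(r i, rcontract (s i) xs)]" if i: "i < n" for i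
  proof -
    let ?w = "rcontract (s i) xs"
    have w: "?w \<in> carrier R" using rcontract_closed s_closed i xs by simp
    have "ER (y1 i \<otimes>\<^bsub>R1\<^esub> X) = lam \<odot> ?w"
      using i xs s_closed w by (simp add: X y1_tclass R1_pair_one_mult ER_tclass)
    then have "x1 i \<otimes>\<^bsub>R1\<^esub> E1 (y1 i \<otimes>\<^bsub>R1\<^esub> X) = tclass [(inv\<^bsub>K\<^esub> lam \<odot> r i, lam \<odot> ?w)]"
      using i w inv_lamK lamK r_closed by (simp add: x1_tclass R1_tclass_mult_incl)
    also have "\<dots> = tclass [(r i, ?w)]"
      using teq_smult_swap[OF lamK _ w, of "inv\<^bsub>K\<^esub> lam \<odot> r i"] i inv_lamK r_closed lam_cancel
      by (simp add: tclass_eq tens_eq.sym)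
    finally show ?thesis .
  qed
  then have "(\<Oplus>\<^bsub>R1\<^esub>i\<in>{..<n}. x1 i \<otimes>\<^bsub>R1\<^esub> E1 (y1 i \<otimes>\<^bsub>R1\<^esub> X)) = (\<Oplus>\<^bsub>R1\<^esub>i\<in>{..<n}. tclass [(r i, rcontract (s i) xs)])"
    using xs r_closed s_closed rcontract_closed by (intro R1.finsum_cong) (auto intro!: R1_tclass_pair_closed)
  also have "\<dots> = tclass (map (\<lambda>i. (r i, rcontract (s i) xs)) [0..<n])"
    using xs r_closed s_closed rcontract_closed by (intro R1_finsum_pairs) auto
  also have "\<dots> = X" unfolding X by (rule tclass_eq[OF teq_expand_rcontract[OF xs]])
  finally show ?thesis .
qed

lemma R1_quasi_basis: "quasi_basis R1 E1 x1 y1 n"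
  unfolding quasi_basis_def using x1_closed y1_closed R1_qbasis_left R1_qbasis_right by blast

lemma R1_sum_x1_y1: "(\<Oplus>\<^bsub>R1\<^esub>i\<in>{..<n}. x1 i \<otimes>\<^bsub>R1\<^esub> y1 i) = inv\<^bsub>K\<^esub> lam \<odot>\<^bsub>R1\<^esub> \<one>\<^bsub>R1\<^esub>"
proof -
  have "x1 i \<otimes>\<^bsub>R1\<^esub> y1 i = tclass [(inv\<^bsub>K\<^esub> lam \<odot> r i, s i)]" if "i < n" for i
    using that inv_lamK r_closed s_closed E_one by (simp add: x1_tclass y1_tclass R1_mult_tclass)
  then have "(\<Oplus>\<^bsub>R1\<^esub>i\<in>{..<n}. x1 i \<otimes>\<^bsub>R1\<^esub> y1 i) = (\<Oplus>\<^bsub>R1\<^esub>i\<in>{..<n}. tclass [(inv\<^bsub>K\<^esub> lam \<odot> r i, s i)])"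
    using inv_lamK r_closed s_closed by (intro R1.finsum_cong) (auto intro!: R1_tclass_pair_closed)
  also have "\<dots> = tclass (smap (inv\<^bsub>K\<^esub> lam) one_list)"
    using inv_lamK r_closed s_closed by (simp add: R1_finsum_pairs comp_def)
  also have "\<dots> = inv\<^bsub>K\<^esub> lam \<odot>\<^bsub>R1\<^esub> \<one>\<^bsub>R1\<^esub>"
    unfolding R1_one by (rule R1_smult_tclass[symmetric, OF inv_lamK carrier_pairs_one_list])
  finally show ?thesis .
qed

text \<open>Multiply by \<open>u \<otimes> 1 = u e\<close>, where \<open>e = 1 \<otimes> 1\<close>, and move \<open>u\<close> across \<open>X\<close>.\<close>

lemma lcontract_centralizer:
  assumes xs: "carrier_pairs xs" and X: "tclass xs \<in> centralizer R1 (incl ` carrier R)" and u: "u \<in> carrier R"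
  shows "lcontract xs u = u \<otimes> lcontract xs \<one>"
proof -
  let ?e = "tclass [(\<one>, \<one>)]"
  have e: "?e \<in> carrier R1" by (simp add: R1_tclass_closed)
  have ue: "incl u \<otimes>\<^bsub>R1\<^esub> ?e = tclass [(u, \<one>)]" using u by (simp add: R1_incl_mult_tclass)
  have "tclass [(lcontract xs u, \<one>)] = tclass xs \<otimes>\<^bsub>R1\<^esub> (incl u \<otimes>\<^bsub>R1\<^esub> ?e)"
    using R1_mult_pair_one[OF xs u] ue by simp
  also have "\<dots> = incl u \<otimes>\<^bsub>R1\<^esub> (tclass xs \<otimes>\<^bsub>R1\<^esub> ?e)"
    using X u e incl_closed unfolding centralizer_def by (auto simp: R1.m_assoc[symmetric])
  also have "\<dots> = tclass [(u \<otimes> lcontract xs \<one>, \<one>)]"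
    using R1_mult_pair_one[OF xs one_closed] u xs lcontract_closed by (simp add: R1_incl_mult_tclass)
  finally have "teq [(lcontract xs u, \<one>)] [(u \<otimes> lcontract xs \<one>, \<one>)]"
    using tclass_eq_iff u xs lcontract_closed by simp
  then show ?thesis using lmultsum_teq u xs lcontract_closed by fastforce
qed

lemma R1_irreducible: "centralizer R1 (incl ` carrier R) = scalars K R1"
proof
  show "centralizer R1 (incl ` carrier R) \<subseteq> scalars K R1"
  proof
    fix X assume X: "X \<in> centralizer R1 (incl ` carrier R)"
    then obtain xs where xs: "carrier_pairs xs" "X = tclass xs"
      unfolding centralizer_def by (auto elim: R1_carrierE)
    let ?w = "lcontract xs \<one>"
    have "?w \<in> centralizer R S"
      unfolding centralizer_def
    proof (intro CollectI conjI ballI)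
      show "?w \<in> carrier R" using lcontract_closed xs by simp
      fix t assume "t \<in> S"
      then show "?w \<otimes> t = t \<otimes> ?w"
        using lcontract_centralizer[OF xs(1), of t] lcontract_rmult[OF xs(1) one_closed, of t] X xs S_carrier by simp
    qed
    then obtain c where c: "c \<in> carrier K" "?w = c \<odot> \<one>" using irreducible unfolding scalars_def by auto
    have "lcontract xs (r i) = c \<odot> r i" if "i < n" for i
      using lcontract_centralizer[OF xs(1), of "r i"] X xs c r_closed[OF that] smult_as_mult_r[OF c(1), of "r i"]
      by simp
    then have eq: "map (\<lambda>i. (lcontract xs (r i), s i)) [0..<n] = smap c one_list" by simp
    have "X = tclass (map (\<lambda>i. (lcontract xs (r i), s i)) [0..<n])"
      using tclass_eq[OF teq_expand_lcontract[OF xs(1)]] xs(2) by simp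
    then have "X = tclass (smap c one_list)" by (simp only: eq)
    then show "X \<in> scalars K R1"
      using R1_smult_tclass[OF c(1) carrier_pairs_one_list] c(1) unfolding scalars_def R1_one by blast
  qed
next
  show "scalars K R1 \<subseteq> centralizer R1 (incl ` carrier R)"
    by (rule scalars_subset_centralizer[OF R1_k_algebra]) (use incl_closed in auto)
qed

lemma R1_strongly_separable_ext: "strongly_separable_ext K R1 (incl ` carrier R) E1 x1 y1 n lam"
  by (rule strongly_separable_ext.intro[OF field_K R1_k_algebra R1_subalgebra R1_irreducible E1_bimodule
        R1_quasi_basis E1_one lamK lam0 R1_sum_x1_y1])

lemma E1_centralizer_scalars: "a \<in> centralizer R1 (incl ` S) \<Longrightarrow> E1 a \<in> scalars K R1"
proof -
  assume a: "a \<in> centralizer R1 (incl ` S)"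
  then have ac: "a \<in> carrier R1" unfolding centralizer_def by auto
  have "ER a \<in> centralizer R S"
    unfolding centralizer_def
  proof (intro CollectI conjI ballI)
    show "ER a \<in> carrier R" using ER_closed[OF ac] .
    fix t assume "t \<in> S"
    then have "t \<in> carrier R" "a \<otimes>\<^bsub>R1\<^esub> incl t = incl t \<otimes>\<^bsub>R1\<^esub> a" using a S_carrier unfolding centralizer_def by auto
    then show "ER a \<otimes> t = t \<otimes> ER a" using ER_lmult ER_rmult ac by metis
  qed
  then obtain c where "c \<in> carrier K" "ER a = c \<odot> \<one>" using irreducible unfolding scalars_def by auto
  then show ?thesis using incl_smult[of c \<one>] incl_one unfolding scalars_def by auto
qed

end

section \<open>A dual basis from depth two\<close>

lemma (in abelian_monoid) finsum_swap:
  assumes "finite A" "finite B" "\<And>i j. i \<in> A \<Longrightarrow> j \<in> B \<Longrightarrow> g i j \<in> carrier G"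
  shows "(\<Oplus>i\<in>A. \<Oplus>j\<in>B. g i j) = (\<Oplus>j\<in>B. \<Oplus>i\<in>A. g i j)"
  using assms
proof (induction A rule: finite_induct)
  case empty then show ?case by (simp add: finsum_zero)
next
  case (insert a A)
  have "(\<Oplus>i\<in>insert a A. \<Oplus>j\<in>B. g i j) = (\<Oplus>j\<in>B. g a j) \<oplus> (\<Oplus>i\<in>A. \<Oplus>j\<in>B. g i j)"
    by (rule finsum_insert) (use insert in \<open>auto simp: Pi_def intro: finsum_closed\<close>)
  also have "\<dots> = (\<Oplus>j\<in>B. g a j) \<oplus> (\<Oplus>j\<in>B. \<Oplus>i\<in>A. g i j)" using insert by simp
  also have "\<dots> = (\<Oplus>j\<in>B. g a j \<oplus> (\<Oplus>i\<in>A. g i j))"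
    by (rule finsum_addf[symmetric]) (use insert in \<open>auto simp: Pi_def intro: finsum_closed\<close>)
  also have "\<dots> = (\<Oplus>j\<in>B. \<Oplus>i\<in>insert a A. g i j)"
    by (rule finsum_cong') (use insert in \<open>auto simp: Pi_def intro!: finsum_closed finsum_insert[symmetric]\<close>)
  finally show ?case .
qed

locale depth_two_ext =
  fixes K :: "'k ring" and T :: "('k,'b) module" (structure) and R' S' :: "'b set" and E' :: "'b \<Rightarrow> 'b"
    and x1 y1 :: "nat \<Rightarrow> 'b" and n :: nat and lam :: 'k
  assumes field_K: "field K" and algebra_T: "k_algebra K T" and subring_R': "subring R' T" and S'_subset: "S' \<subseteq> R'"
    and bimodule_E': "bimodule_map T R' E'" and qbasis: "quasi_basis T E' x1 y1 n"
    and lamK: "lam \<in> carrier K" and lam0: "lam \<noteq> \<zero>\<^bsub>K\<^esub>"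
    and sum_x1_y1: "(\<Oplus>i\<in>{..<n}. x1 i \<otimes> y1 i) = inv\<^bsub>K\<^esub> lam \<odot> \<one>"
    and E'_centralizer_scalars: "\<And>a. a \<in> centralizer T S' \<Longrightarrow> E' a \<in> scalars K T"
    and depth_two: "free_right_with_basis_in T R' (centralizer T S')"
begin

lemma ring_T: "ring T" using algebra_T unfolding k_algebra_def by auto
sublocale ring T by (rule ring_T)
sublocale Tmod: module K T using algebra_T unfolding k_algebra_def by auto
sublocale KF: field K by (rule field_K)

abbreviation "A \<equiv> centralizer T S'"

lemma R'_carrier: "x \<in> R' \<Longrightarrow> x \<in> carrier T" using subringE(1)[OF subring_R'] by auto
lemma R'_mult: "x \<in> R' \<Longrightarrow> y \<in> R' \<Longrightarrow> x \<otimes> y \<in> R'" using subringE(6)[OF subring_R'] by auto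
lemma R'_add: "x \<in> R' \<Longrightarrow> y \<in> R' \<Longrightarrow> x \<oplus> y \<in> R'" using subringE(7)[OF subring_R'] by auto
lemma R'_zero: "\<zero> \<in> R'" using subringE(2)[OF subring_R'] by auto
lemma R'_finsum: "finite I \<Longrightarrow> (\<And>i. i \<in> I \<Longrightarrow> f i \<in> R') \<Longrightarrow> finsum T f I \<in> R'"
proof (induction I rule: finite_induct)
  case empty then show ?case using R'_zero by simp
next
  case (insert a I)
  then show ?case using R'_add R'_carrier by (simp add: finsum_insert Pi_def)
qed

lemma E'_in_R': "m \<in> carrier T \<Longrightarrow> E' m \<in> R'" using bimodule_E' unfolding bimodule_map_def by auto
lemma E_closed: "m \<in> carrier T \<Longrightarrow> E' m \<in> carrier T" using E'_in_R' R'_carrier by auto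
lemma E_add: "m \<in> carrier T \<Longrightarrow> m' \<in> carrier T \<Longrightarrow> E' (m \<oplus> m') = E' m \<oplus> E' m'"
  using bimodule_E' unfolding bimodule_map_def by auto
lemma E_lmult: "t \<in> R' \<Longrightarrow> m \<in> carrier T \<Longrightarrow> E' (t \<otimes> m) = t \<otimes> E' m"
  using bimodule_E' unfolding bimodule_map_def by auto
lemma E_rmult: "t \<in> R' \<Longrightarrow> m \<in> carrier T \<Longrightarrow> E' (m \<otimes> t) = E' m \<otimes> t"
  using bimodule_E' unfolding bimodule_map_def by auto
lemma E_zero: "E' \<zero> = \<zero>" using E_lmult[OF R'_zero, of \<zero>] E_closed[of \<zero>] by simp
lemma E_finsum: "finite I \<Longrightarrow> (\<And>i. i \<in> I \<Longrightarrow> f i \<in> carrier T) \<Longrightarrow> E' (finsum T f I) = (\<Oplus>i\<in>I. E' (f i))"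
proof (induction I rule: finite_induct)
  case empty then show ?case using E_zero by simp
next
  case (insert a I)
  then show ?case by (simp add: finsum_insert Pi_def E_add E_closed)
qed

lemma x1_closed: "i < n \<Longrightarrow> x1 i \<in> carrier T" using qbasis unfolding quasi_basis_def by auto
lemma y1_closed: "i < n \<Longrightarrow> y1 i \<in> carrier T" using qbasis unfolding quasi_basis_def by auto
lemma qbasis_expand_left: "m \<in> carrier T \<Longrightarrow> (\<Oplus>i\<in>{..<n}. E' (m \<otimes> x1 i) \<otimes> y1 i) = m"
  using qbasis unfolding quasi_basis_def by auto
lemma qbasis_expand_right: "m \<in> carrier T \<Longrightarrow> (\<Oplus>i\<in>{..<n}. x1 i \<otimes> E' (y1 i \<otimes> m)) = m"
  using qbasis unfolding quasi_basis_def by auto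

lemma A_carrier: "a \<in> A \<Longrightarrow> a \<in> carrier T" unfolding centralizer_def by auto
lemma A_comm: "a \<in> A \<Longrightarrow> t \<in> S' \<Longrightarrow> a \<otimes> t = t \<otimes> a" unfolding centralizer_def by auto

definition basis :: "'b set" where
  "basis = (SOME basis. basis \<subseteq> A \<and> (\<forall>X\<in>carrier T. \<exists>!f. f \<in> basis \<rightarrow>\<^sub>E R' \<and> finite {b\<in>basis. f b \<noteq> \<zero>} \<and>
            X = (\<Oplus>b\<in>{b\<in>basis. f b \<noteq> \<zero>}. b \<otimes> f b)))"

lemma basis_props:
  shows "basis \<subseteq> A"
    and "X \<in> carrier T \<Longrightarrow> \<exists>!f. f \<in> basis \<rightarrow>\<^sub>E R' \<and> finite {b\<in>basis. f b \<noteq> \<zero>} \<and>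
           X = (\<Oplus>b\<in>{b\<in>basis. f b \<noteq> \<zero>}. b \<otimes> f b)"
  using someI_ex[OF depth_two[unfolded free_right_with_basis_in_def]] unfolding basis_def[symmetric] by auto

definition coord :: "nat \<Rightarrow> 'b \<Rightarrow> 'b" where
  "coord i = (THE f. f \<in> basis \<rightarrow>\<^sub>E R' \<and> finite {b\<in>basis. f b \<noteq> \<zero>} \<and>
            x1 i = (\<Oplus>b\<in>{b\<in>basis. f b \<noteq> \<zero>}. b \<otimes> f b))"

lemma coord_props: assumes i: "i < n" shows "coord i \<in> basis \<rightarrow>\<^sub>E R' \<and> finite {b\<in>basis. coord i b \<noteq> \<zero>} \<and>
            x1 i = (\<Oplus>b\<in>{b\<in>basis. coord i b \<noteq> \<zero>}. b \<otimes> coord i b)"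
proof -
  have ex: "\<exists>!f. f \<in> basis \<rightarrow>\<^sub>E R' \<and> finite {b\<in>basis. f b \<noteq> \<zero>} \<and> x1 i = (\<Oplus>b\<in>{b\<in>basis. f b \<noteq> \<zero>}. b \<otimes> f b)"
    by (rule basis_props(2)[OF x1_closed[OF i]])
  show ?thesis unfolding coord_def by (rule theI'[OF ex])
qed

definition supp :: "'b set" where
  "supp = (\<Union>i<n. {b\<in>basis. coord i b \<noteq> \<zero>})"

lemma supp_finite: "finite supp" unfolding supp_def using coord_props by auto
lemma supp_subset_basis: "supp \<subseteq> basis" unfolding supp_def by auto
lemma supp_in_A: "b \<in> supp \<Longrightarrow> b \<in> A" using supp_subset_basis basis_props(1) by auto
lemma supp_carrier: "b \<in> supp \<Longrightarrow> b \<in> carrier T" using supp_in_A A_carrier by auto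
lemma coord_in_R': "i < n \<Longrightarrow> b \<in> basis \<Longrightarrow> coord i b \<in> R'" using coord_props by auto
lemma coord_closed: "i < n \<Longrightarrow> b \<in> supp \<Longrightarrow> coord i b \<in> carrier T" using coord_in_R' supp_subset_basis R'_carrier by auto
lemma coord_in_R'_supp: "i < n \<Longrightarrow> b \<in> supp \<Longrightarrow> coord i b \<in> R'" using coord_in_R' supp_subset_basis by auto
lemma coord_outside_supp: "i < n \<Longrightarrow> b \<in> basis \<Longrightarrow> b \<notin> supp \<Longrightarrow> coord i b = \<zero>" unfolding supp_def by auto

lemma x1_expand_supp: "i < n \<Longrightarrow> x1 i = (\<Oplus>b\<in>supp. b \<otimes> coord i b)"
proof -
  assume i: "i < n"
  have "x1 i = (\<Oplus>b\<in>{b\<in>basis. coord i b \<noteq> \<zero>}. b \<otimes> coord i b)" using coord_props[OF i] by simp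
  also have "\<dots> = (\<Oplus>b\<in>supp. b \<otimes> coord i b)"
    by (rule add.finprod_mono_neutral_cong_left[OF supp_finite]) (use i supp_carrier supp_subset_basis coord_closed in \<open>auto simp: supp_def\<close>)
  finally show ?thesis .
qed

text \<open>With \<open>x\<^sub>i = \<Sum>\<^sub>b b coord\<^sub>i(b)\<close>, the elements \<open>\<gamma>\<^sub>b\<close> form a dual basis to the \<open>b \<in> supp\<close>.\<close>

definition gam :: "'b \<Rightarrow> 'b" where
  "gam b = (\<Oplus>i\<in>{..<n}. coord i b \<otimes> y1 i)"

lemma gam_closed: "b \<in> supp \<Longrightarrow> gam b \<in> carrier T"
  unfolding gam_def by (rule finsum_closed) (auto simp: coord_closed y1_closed)

lemma expand_by_coord: "X \<in> carrier T \<Longrightarrow> X = (\<Oplus>b\<in>supp. b \<otimes> (\<Oplus>i\<in>{..<n}. coord i b \<otimes> E' (y1 i \<otimes> X)))"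
proof -
  assume X: "X \<in> carrier T"
  have c: "\<And>i. i < n \<Longrightarrow> E' (y1 i \<otimes> X) \<in> carrier T" using E_closed y1_closed X by simp
  have "X = (\<Oplus>i\<in>{..<n}. x1 i \<otimes> E' (y1 i \<otimes> X))" using qbasis_expand_right[OF X] by simp
  also have "\<dots> = (\<Oplus>i\<in>{..<n}. \<Oplus>b\<in>supp. b \<otimes> (coord i b \<otimes> E' (y1 i \<otimes> X)))"
  proof (rule finsum_cong')
    fix i assume "i \<in> {..<n}"
    then have i: "i < n" by simp
    have "x1 i \<otimes> E' (y1 i \<otimes> X) = (\<Oplus>b\<in>supp. b \<otimes> coord i b) \<otimes> E' (y1 i \<otimes> X)" using x1_expand_supp[OF i] by simp
    also have "\<dots> = (\<Oplus>b\<in>supp. b \<otimes> coord i b \<otimes> E' (y1 i \<otimes> X))"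
      by (rule finsum_ldistr) (use supp_finite c i supp_carrier coord_closed in auto)
    also have "\<dots> = (\<Oplus>b\<in>supp. b \<otimes> (coord i b \<otimes> E' (y1 i \<otimes> X)))"
      by (rule finsum_cong') (use supp_finite c i supp_carrier coord_closed in \<open>auto simp: m_assoc\<close>)
    finally show "x1 i \<otimes> E' (y1 i \<otimes> X) = (\<Oplus>b\<in>supp. b \<otimes> (coord i b \<otimes> E' (y1 i \<otimes> X)))" .
  qed (use supp_finite c supp_carrier coord_closed in \<open>auto simp: Pi_def intro: finsum_closed\<close>)
  also have "\<dots> = (\<Oplus>b\<in>supp. \<Oplus>i\<in>{..<n}. b \<otimes> (coord i b \<otimes> E' (y1 i \<otimes> X)))"
    by (rule finsum_swap) (use supp_finite c supp_carrier coord_closed in auto)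
  also have "\<dots> = (\<Oplus>b\<in>supp. b \<otimes> (\<Oplus>i\<in>{..<n}. coord i b \<otimes> E' (y1 i \<otimes> X)))"
    by (rule finsum_cong') (use supp_finite c supp_carrier coord_closed in \<open>auto simp: Pi_def finsum_rdistr intro: finsum_closed\<close>)
  finally show ?thesis .
qed

lemma E'_gam_mult:
  assumes b: "b \<in> supp" and X: "X \<in> carrier T"
  shows "E' (gam b \<otimes> X) = (\<Oplus>i\<in>{..<n}. coord i b \<otimes> E' (y1 i \<otimes> X))"
proof -
  have "gam b \<otimes> X = (\<Oplus>i\<in>{..<n}. coord i b \<otimes> y1 i \<otimes> X)"
    unfolding gam_def by (rule finsum_ldistr) (use b X coord_closed y1_closed in auto)
  then have "E' (gam b \<otimes> X) = (\<Oplus>i\<in>{..<n}. E' (coord i b \<otimes> y1 i \<otimes> X))"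
    using E_finsum[of "{..<n}" "\<lambda>i. coord i b \<otimes> y1 i \<otimes> X"] b X coord_closed y1_closed by simp
  also have "\<dots> = (\<Oplus>i\<in>{..<n}. coord i b \<otimes> E' (y1 i \<otimes> X))"
    by (rule finsum_cong') (use b X coord_closed y1_closed E_closed in \<open>auto simp: m_assoc E_lmult coord_in_R'_supp\<close>)
  finally show ?thesis .
qed

lemma dual_basis_expand_left: "X \<in> carrier T \<Longrightarrow> X = (\<Oplus>b\<in>supp. b \<otimes> E' (gam b \<otimes> X))"
proof -
  assume X: "X \<in> carrier T"
  have "(\<Oplus>b\<in>supp. b \<otimes> E' (gam b \<otimes> X)) = (\<Oplus>b\<in>supp. b \<otimes> (\<Oplus>i\<in>{..<n}. coord i b \<otimes> E' (y1 i \<otimes> X)))"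
    by (rule finsum_cong') (use X E'_gam_mult supp_carrier coord_closed y1_closed E_closed in \<open>auto intro!: finsum_closed\<close>)
  then show ?thesis using expand_by_coord[OF X] by simp
qed

lemma dual_basis_expand_right: "c \<in> carrier T \<Longrightarrow> (\<Oplus>b\<in>supp. E' (c \<otimes> b) \<otimes> gam b) = c"
proof -
  assume c: "c \<in> carrier T"
  have "(\<Oplus>b\<in>supp. E' (c \<otimes> b) \<otimes> gam b) = (\<Oplus>b\<in>supp. \<Oplus>i\<in>{..<n}. E' (c \<otimes> b) \<otimes> (coord i b \<otimes> y1 i))"
    unfolding gam_def
    by (rule finsum_cong') (use c supp_carrier coord_closed y1_closed E_closed in \<open>auto simp: finsum_rdistr Pi_def\<close>)
  also have "\<dots> = (\<Oplus>i\<in>{..<n}. \<Oplus>b\<in>supp. E' (c \<otimes> b) \<otimes> (coord i b \<otimes> y1 i))"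
    by (rule finsum_swap) (use supp_finite c supp_carrier coord_closed y1_closed E_closed in auto)
  also have "\<dots> = (\<Oplus>i\<in>{..<n}. E' (c \<otimes> x1 i) \<otimes> y1 i)"
  proof (rule finsum_cong')
    fix i assume "i \<in> {..<n}"
    then have i: "i < n" by simp
    have "(\<Oplus>b\<in>supp. E' (c \<otimes> b) \<otimes> (coord i b \<otimes> y1 i)) = (\<Oplus>b\<in>supp. E' (c \<otimes> (b \<otimes> coord i b))) \<otimes> y1 i"
    proof -
      have "(\<Oplus>b\<in>supp. E' (c \<otimes> b) \<otimes> (coord i b \<otimes> y1 i)) = (\<Oplus>b\<in>supp. E' (c \<otimes> (b \<otimes> coord i b)) \<otimes> y1 i)"
        by (rule finsum_cong') (use c i supp_carrier coord_closed coord_in_R' supp_subset_basis y1_closed E_closed in \<open>auto simp: m_assoc[symmetric] E_rmult coord_in_R'_supp\<close>)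
      also have "\<dots> = (\<Oplus>b\<in>supp. E' (c \<otimes> (b \<otimes> coord i b))) \<otimes> y1 i"
        by (rule finsum_ldistr[symmetric]) (use supp_finite c i supp_carrier coord_closed y1_closed E_closed in auto)
      finally show ?thesis .
    qed
    also have "(\<Oplus>b\<in>supp. E' (c \<otimes> (b \<otimes> coord i b))) = E' (c \<otimes> x1 i)"
    proof -
      have "c \<otimes> x1 i = (\<Oplus>b\<in>supp. c \<otimes> (b \<otimes> coord i b))"
        unfolding x1_expand_supp[OF i] by (rule finsum_rdistr) (use supp_finite c i supp_carrier coord_closed in auto)
      then show ?thesis using E_finsum[OF supp_finite, of "\<lambda>b. c \<otimes> (b \<otimes> coord i b)"] c i supp_carrier coord_closed by simp
    qed
    finally show "(\<Oplus>b\<in>supp. E' (c \<otimes> b) \<otimes> (coord i b \<otimes> y1 i)) = E' (c \<otimes> x1 i) \<otimes> y1 i" .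
  qed (use c x1_closed y1_closed E_closed in auto)
  also have "\<dots> = c" by (rule qbasis_expand_left[OF c])
  finally show ?thesis .
qed

lemma sum_supp_gam: "(\<Oplus>b\<in>supp. b \<otimes> gam b) = inv\<^bsub>K\<^esub> lam \<odot> \<one>"
proof -
  have "(\<Oplus>b\<in>supp. b \<otimes> gam b) = (\<Oplus>b\<in>supp. \<Oplus>i\<in>{..<n}. b \<otimes> (coord i b \<otimes> y1 i))"
    unfolding gam_def
    by (rule finsum_cong') (use supp_carrier coord_closed y1_closed in \<open>auto simp: finsum_rdistr Pi_def\<close>)
  also have "\<dots> = (\<Oplus>i\<in>{..<n}. \<Oplus>b\<in>supp. b \<otimes> (coord i b \<otimes> y1 i))"
    by (rule finsum_swap) (use supp_finite supp_carrier coord_closed y1_closed in auto)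
  also have "\<dots> = (\<Oplus>i\<in>{..<n}. x1 i \<otimes> y1 i)"
  proof (rule finsum_cong')
    fix i assume "i \<in> {..<n}"
    then have i: "i < n" by simp
    have "(\<Oplus>b\<in>supp. b \<otimes> (coord i b \<otimes> y1 i)) = (\<Oplus>b\<in>supp. b \<otimes> coord i b \<otimes> y1 i)"
      by (rule finsum_cong') (use i supp_carrier coord_closed y1_closed in \<open>auto simp: m_assoc\<close>)
    also have "\<dots> = x1 i \<otimes> y1 i"
      unfolding x1_expand_supp[OF i] by (rule finsum_ldistr[symmetric]) (use supp_finite i supp_carrier coord_closed y1_closed in auto)
    finally show "(\<Oplus>b\<in>supp. b \<otimes> (coord i b \<otimes> y1 i)) = x1 i \<otimes> y1 i" .
  qed (use x1_closed y1_closed in auto)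
  finally show ?thesis using sum_x1_y1 by simp
qed


lemma S'_carrier: "t \<in> S' \<Longrightarrow> t \<in> carrier T" using S'_subset R'_carrier by auto

lemma repr_supp: assumes g: "g \<in> basis \<rightarrow>\<^sub>E R'" and z: "\<And>b. b \<in> basis \<Longrightarrow> b \<notin> supp \<Longrightarrow> g b = \<zero>"
  shows "finite {b\<in>basis. g b \<noteq> \<zero>}" "(\<Oplus>b\<in>{b\<in>basis. g b \<noteq> \<zero>}. b \<otimes> g b) = (\<Oplus>b\<in>supp. b \<otimes> g b)"
proof -
  have sub: "{b\<in>basis. g b \<noteq> \<zero>} \<subseteq> supp" using z by auto
  then show "finite {b\<in>basis. g b \<noteq> \<zero>}" using supp_finite finite_subset by auto
  have gc: "\<And>b. b \<in> supp \<Longrightarrow> g b \<in> carrier T" using g supp_subset_basis R'_carrier by auto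
  show "(\<Oplus>b\<in>{b\<in>basis. g b \<noteq> \<zero>}. b \<otimes> g b) = (\<Oplus>b\<in>supp. b \<otimes> g b)"
    by (rule add.finprod_mono_neutral_cong_left[OF supp_finite sub]) (use supp_carrier gc supp_subset_basis in auto)
qed

lemma supp_coords_unique:
  assumes f: "f \<in> basis \<rightarrow>\<^sub>E R'" "\<And>b. b \<in> basis \<Longrightarrow> b \<notin> supp \<Longrightarrow> f b = \<zero>"
    and g: "g \<in> basis \<rightarrow>\<^sub>E R'" "\<And>b. b \<in> basis \<Longrightarrow> b \<notin> supp \<Longrightarrow> g b = \<zero>"
    and eq: "(\<Oplus>b\<in>supp. b \<otimes> f b) = (\<Oplus>b\<in>supp. b \<otimes> g b)"
  shows "f = g"
proof -
  let ?Y = "\<Oplus>b\<in>supp. b \<otimes> f b"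
  have "f b \<in> carrier T" if "b \<in> supp" for b
    using f(1) that supp_subset_basis R'_carrier PiE_mem by blast
  then have "?Y \<in> carrier T" using supp_carrier by (auto intro!: finsum_closed)
  moreover have "f \<in> basis \<rightarrow>\<^sub>E R' \<and> finite {b\<in>basis. f b \<noteq> \<zero>} \<and> ?Y = (\<Oplus>b\<in>{b\<in>basis. f b \<noteq> \<zero>}. b \<otimes> f b)"
    using f repr_supp[OF f] by simp
  moreover have "g \<in> basis \<rightarrow>\<^sub>E R' \<and> finite {b\<in>basis. g b \<noteq> \<zero>} \<and> ?Y = (\<Oplus>b\<in>{b\<in>basis. g b \<noteq> \<zero>}. b \<otimes> g b)"
    using g repr_supp[OF g] eq by simp
  ultimately show ?thesis using basis_props(2) by blast
qed

lemma lmult_x1_expand_supp: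
  assumes t: "t \<in> S'" and j: "j < n"
  shows "t \<otimes> x1 j = (\<Oplus>b\<in>supp. b \<otimes> (t \<otimes> coord j b))"
proof -
  have tc: "t \<in> carrier T" using S'_carrier t .
  have "(\<Oplus>b\<in>supp. b \<otimes> (t \<otimes> coord j b)) = (\<Oplus>b\<in>supp. t \<otimes> (b \<otimes> coord j b))"
  proof (rule finsum_cong')
    fix b assume b: "b \<in> supp"
    then have "b \<otimes> t = t \<otimes> b" using A_comm[OF supp_in_A t] by simp
    then show "b \<otimes> (t \<otimes> coord j b) = t \<otimes> (b \<otimes> coord j b)"
      using b supp_carrier tc coord_closed j by (simp add: m_assoc[symmetric])
  qed (use tc supp_carrier coord_closed j in auto)
  also have "\<dots> = t \<otimes> x1 j" unfolding x1_expand_supp[OF j]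
    by (rule finsum_rdistr[symmetric]) (use supp_finite tc supp_carrier coord_closed j in auto)
  finally show ?thesis by simp
qed

text \<open>Both sides are the \<open>b\<close>-th coordinate of \<open>t x\<^sub>j\<close>; this is where freeness is used.\<close>

lemma coord_lmult_centralizer: assumes t: "t \<in> S'" and j: "j < n" and b: "b \<in> supp"
  shows "t \<otimes> coord j b = (\<Oplus>i\<in>{..<n}. coord i b \<otimes> E' (y1 i \<otimes> (t \<otimes> x1 j)))"
proof -
  let ?Y = "t \<otimes> x1 j"
  have tc: "t \<in> carrier T" using S'_carrier t .
  have tR: "t \<in> R'" using S'_subset t by auto
  have Yc: "?Y \<in> carrier T" using tc x1_closed[OF j] by simp
  define g1 where "g1 = restrict (\<lambda>b. t \<otimes> coord j b) basis"
  define g2 where "g2 = restrict (\<lambda>b. \<Oplus>i\<in>{..<n}. coord i b \<otimes> E' (y1 i \<otimes> ?Y)) basis"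
  have g1P: "g1 \<in> basis \<rightarrow>\<^sub>E R'" unfolding g1_def using tR coord_in_R' j R'_mult by auto
  have g1z: "\<And>b. b \<in> basis \<Longrightarrow> b \<notin> supp \<Longrightarrow> g1 b = \<zero>" unfolding g1_def using coord_outside_supp j tc by simp
  have g2P: "g2 \<in> basis \<rightarrow>\<^sub>E R'" unfolding g2_def
    using coord_in_R' R'_mult R'_finsum E'_in_R' y1_closed Yc by (auto intro!: R'_finsum R'_mult)
  have g2z: "\<And>b. b \<in> basis \<Longrightarrow> b \<notin> supp \<Longrightarrow> g2 b = \<zero>"
  proof -
    fix b assume b: "b \<in> basis" "b \<notin> supp"
    have "(\<Oplus>i\<in>{..<n}. coord i b \<otimes> E' (y1 i \<otimes> ?Y)) = (\<Oplus>i\<in>{..<n}. \<zero>)"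
      by (rule finsum_cong') (use b coord_outside_supp Yc y1_closed E_closed in auto)
    then show "g2 b = \<zero>" unfolding g2_def using b finsum_zero by simp
  qed
  have "(\<Oplus>b\<in>supp. b \<otimes> g1 b) = (\<Oplus>b\<in>supp. b \<otimes> (t \<otimes> coord j b))"
    by (rule finsum_cong') (use supp_subset_basis tc supp_carrier coord_closed j in \<open>auto simp: g1_def\<close>)
  then have s1: "?Y = (\<Oplus>b\<in>supp. b \<otimes> g1 b)" using lmult_x1_expand_supp[OF t j] by simp
  have s2: "?Y = (\<Oplus>b\<in>supp. b \<otimes> g2 b)"
  proof -
    have "(\<Oplus>b\<in>supp. b \<otimes> g2 b) = (\<Oplus>b\<in>supp. b \<otimes> (\<Oplus>i\<in>{..<n}. coord i b \<otimes> E' (y1 i \<otimes> ?Y)))"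
    proof (rule finsum_cong')
      fix b assume b: "b \<in> supp"
      show "b \<otimes> g2 b = b \<otimes> (\<Oplus>i\<in>{..<n}. coord i b \<otimes> E' (y1 i \<otimes> ?Y))" unfolding g2_def using b supp_subset_basis by auto
    next
      show "(\<lambda>b. b \<otimes> (\<Oplus>i\<in>{..<n}. coord i b \<otimes> E' (y1 i \<otimes> ?Y))) \<in> supp \<rightarrow> carrier T"
        using supp_carrier coord_closed y1_closed E_closed Yc by (auto intro!: finsum_closed)
    qed simp
    then show ?thesis using expand_by_coord[OF Yc] by simp
  qed
  have "g1 = g2" by (rule supp_coords_unique[OF g1P g1z g2P g2z HOL.trans[OF s1[symmetric] s2]])
  then have "g1 b = g2 b" by simp
  then show ?thesis unfolding g1_def g2_def using b supp_subset_basis by auto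
qed

lemma gam_mult:
  assumes b: "b \<in> supp" and m: "m \<in> carrier T"
  shows "gam b \<otimes> m = (\<Oplus>j\<in>{..<n}. (\<Oplus>i\<in>{..<n}. coord i b \<otimes> E' (y1 i \<otimes> (m \<otimes> x1 j))) \<otimes> y1 j)"
proof -
  have "gam b \<otimes> m = (\<Oplus>i\<in>{..<n}. coord i b \<otimes> y1 i \<otimes> m)"
    unfolding gam_def by (rule finsum_ldistr) (use b m coord_closed y1_closed in auto)
  also have "\<dots> = (\<Oplus>i\<in>{..<n}. \<Oplus>j\<in>{..<n}. (coord i b \<otimes> E' (y1 i \<otimes> (m \<otimes> x1 j))) \<otimes> y1 j)"
  proof (rule finsum_cong')
    fix i assume "i \<in> {..<n}"
    then have i: "i < n" by simp
    have ym: "y1 i \<otimes> m \<in> carrier T" using i m y1_closed by simp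
    have "coord i b \<otimes> y1 i \<otimes> m = coord i b \<otimes> (\<Oplus>j\<in>{..<n}. E' (y1 i \<otimes> m \<otimes> x1 j) \<otimes> y1 j)"
      using qbasis_expand_left[OF ym] i b m coord_closed y1_closed by (simp add: m_assoc)
    also have "\<dots> = (\<Oplus>j\<in>{..<n}. coord i b \<otimes> (E' (y1 i \<otimes> m \<otimes> x1 j) \<otimes> y1 j))"
      by (rule finsum_rdistr) (use i b ym coord_closed x1_closed y1_closed E_closed in auto)
    also have "\<dots> = (\<Oplus>j\<in>{..<n}. (coord i b \<otimes> E' (y1 i \<otimes> (m \<otimes> x1 j))) \<otimes> y1 j)"
      by (rule finsum_cong') (use i b m coord_closed x1_closed y1_closed E_closed in \<open>auto simp: m_assoc\<close>)
    finally show "coord i b \<otimes> y1 i \<otimes> m = (\<Oplus>j\<in>{..<n}. (coord i b \<otimes> E' (y1 i \<otimes> (m \<otimes> x1 j))) \<otimes> y1 j)" .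
  qed (use b m coord_closed x1_closed y1_closed E_closed in \<open>auto intro!: finsum_closed\<close>)
  also have "\<dots> = (\<Oplus>j\<in>{..<n}. \<Oplus>i\<in>{..<n}. (coord i b \<otimes> E' (y1 i \<otimes> (m \<otimes> x1 j))) \<otimes> y1 j)"
    by (rule finsum_swap) (use b m coord_closed x1_closed y1_closed E_closed in auto)
  also have "\<dots> = (\<Oplus>j\<in>{..<n}. (\<Oplus>i\<in>{..<n}. coord i b \<otimes> E' (y1 i \<otimes> (m \<otimes> x1 j))) \<otimes> y1 j)"
    by (rule finsum_cong') (use b m coord_closed x1_closed y1_closed E_closed in \<open>auto simp: finsum_ldistr intro!: finsum_closed\<close>)
  finally show ?thesis .
qed

lemma gam_in_A: assumes b: "b \<in> supp" shows "gam b \<in> A"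
  unfolding centralizer_def
proof (intro CollectI conjI ballI)
  show "gam b \<in> carrier T" by (rule gam_closed[OF b])
  fix t assume t: "t \<in> S'"
  have tc: "t \<in> carrier T" using S'_carrier t .
  have "gam b \<otimes> t = (\<Oplus>j\<in>{..<n}. t \<otimes> coord j b \<otimes> y1 j)"
    unfolding gam_mult[OF b tc]
    by (rule finsum_cong') (use coord_lmult_centralizer[OF t _ b, symmetric] b tc coord_closed y1_closed in auto)
  also have "\<dots> = (\<Oplus>j\<in>{..<n}. t \<otimes> (coord j b \<otimes> y1 j))"
    by (rule finsum_cong') (use b tc coord_closed y1_closed in \<open>auto simp: m_assoc\<close>)
  also have "\<dots> = t \<otimes> gam b" unfolding gam_def
    by (rule finsum_rdistr[symmetric]) (use b tc coord_closed y1_closed in auto)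
  finally show "gam b \<otimes> t = t \<otimes> gam b" .
qed

end

section \<open>Separability of the centralizer\<close>

lemma (in ring) centralizer_subring:
  assumes S: "S \<subseteq> carrier R"
  shows "subring (centralizer R S) R"
proof (rule subringI)
  show "centralizer R S \<subseteq> carrier R" "\<one> \<in> centralizer R S"
    using S unfolding centralizer_def by auto
next
  fix h assume "h \<in> centralizer R S"
  then show "\<ominus> h \<in> centralizer R S"
    using S unfolding centralizer_def by (auto simp: l_minus r_minus subset_iff)
next
  fix h1 h2 assume h: "h1 \<in> centralizer R S" "h2 \<in> centralizer R S"
  then have h1: "h1 \<in> carrier R" "\<And>t. t \<in> S \<Longrightarrow> h1 \<otimes> t = t \<otimes> h1"
    and h2: "h2 \<in> carrier R" "\<And>t. t \<in> S \<Longrightarrow> h2 \<otimes> t = t \<otimes> h2"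
    unfolding centralizer_def by auto
  have "h1 \<otimes> h2 \<otimes> t = t \<otimes> (h1 \<otimes> h2)" "(h1 \<oplus> h2) \<otimes> t = t \<otimes> (h1 \<oplus> h2)" if t: "t \<in> S" for t
  proof -
    have tc: "t \<in> carrier R" using S t by auto
    have "h1 \<otimes> h2 \<otimes> t = h1 \<otimes> (t \<otimes> h2)" using h1 h2 tc t by (simp add: m_assoc)
    also have "\<dots> = t \<otimes> (h1 \<otimes> h2)" using h1 h2 tc t by (simp add: m_assoc[symmetric])
    finally show "h1 \<otimes> h2 \<otimes> t = t \<otimes> (h1 \<otimes> h2)" .
    show "(h1 \<oplus> h2) \<otimes> t = t \<otimes> (h1 \<oplus> h2)" using h1 h2 tc t by (simp add: l_distr r_distr)
  qed
  then show "h1 \<otimes> h2 \<in> centralizer R S" "h1 \<oplus> h2 \<in> centralizer R S"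
    using h1 h2 unfolding centralizer_def by auto
qed

lemma centralizer_k_algebra:
  assumes alg: "k_algebra K T" and S: "S \<subseteq> carrier T"
  shows "k_algebra K (T\<lparr>carrier := centralizer T S\<rparr>)"
proof -
  interpret ring T using alg unfolding k_algebra_def by auto
  interpret Tmod: module K T using alg unfolding k_algebra_def by auto
  let ?A = "centralizer T S"
  have sub: "subring ?A T" by (rule centralizer_subring[OF S])
  have assoc: "c \<odot>\<^bsub>T\<^esub> (x \<otimes>\<^bsub>T\<^esub> y) = (c \<odot>\<^bsub>T\<^esub> x) \<otimes>\<^bsub>T\<^esub> y \<and> c \<odot>\<^bsub>T\<^esub> (x \<otimes>\<^bsub>T\<^esub> y) = x \<otimes>\<^bsub>T\<^esub> (c \<odot>\<^bsub>T\<^esub> y)"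
    if "c \<in> carrier K" "x \<in> carrier T" "y \<in> carrier T" for c x y
    using alg that unfolding k_algebra_def by blast
  have "c \<odot>\<^bsub>T\<^esub> a \<in> ?A" if "c \<in> carrier K" "a \<in> ?A" for c a
  proof -
    have a: "a \<in> carrier T" using that(2) subringE(1)[OF sub] by blast
    have "c \<odot>\<^bsub>T\<^esub> \<one>\<^bsub>T\<^esub> \<in> ?A" using scalars_subset_centralizer[OF alg S] that(1) unfolding scalars_def by blast
    moreover have "c \<odot>\<^bsub>T\<^esub> a = (c \<odot>\<^bsub>T\<^esub> \<one>\<^bsub>T\<^esub>) \<otimes>\<^bsub>T\<^esub> a"
      using assoc[OF that(1) one_closed a] a by simp
    ultimately show ?thesis using subringE(6)[OF sub] that(2) by simp
  qed
  then have "submodule ?A K T"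
    using subringE[OF sub] by (intro Tmod.submoduleI) auto
  then have "module K (T\<lparr>carrier := ?A\<rparr>)" using submodule.submodule_is_module Tmod.module_axioms by blast
  moreover have "ring (T\<lparr>carrier := ?A\<rparr>)" by (rule subring_is_ring[OF sub])
  moreover have "field K" using alg unfolding k_algebra_def by blast
  ultimately show ?thesis
    unfolding k_algebra_def using assoc subringE(1)[OF sub] by auto
qed

context depth_two_ext
begin

abbreviation "D \<equiv> T\<lparr>carrier := A\<rparr>"
abbreviation "SD \<equiv> scalars K D"

lemma S'_subset_carrier: "S' \<subseteq> carrier T" using S'_carrier by auto

lemma smult_mult_T: "c \<in> carrier K \<Longrightarrow> x \<in> carrier T \<Longrightarrow> y \<in> carrier T \<Longrightarrow>
    c \<odot> (x \<otimes> y) = (c \<odot> x) \<otimes> y \<and> c \<odot> (x \<otimes> y) = x \<otimes> (c \<odot> y)"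
  using algebra_T unfolding k_algebra_def by blast

lemma k_algebra_D: "k_algebra K D" by (rule centralizer_k_algebra[OF algebra_T S'_subset_carrier])

lemma SD_eq: "SD = scalars K T" by (simp add: scalars_def)

lemma SD_subset_A: "SD \<subseteq> A"
  unfolding SD_eq by (rule scalars_subset_centralizer[OF algebra_T S'_subset_carrier])

lemma A_mult: "x \<in> A \<Longrightarrow> y \<in> A \<Longrightarrow> x \<otimes> y \<in> A"
  using subringE(6)[OF centralizer_subring[OF S'_subset_carrier]] by simp

lemma ring_D: "ring D" using k_algebra_D unfolding k_algebra_def by blast

sublocale DT: tensor_over D SD
  by (rule tensor_over.intro[OF ring_D]) (rule tensor_over_axioms.intro, use SD_subset_A in simp)

definition supp_list :: "'b list" where
  "supp_list = (SOME l. set l = supp \<and> distinct l)"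

lemma supp_list: "set supp_list = supp" "distinct supp_list"
  using someI_ex[OF finite_distinct_list[OF supp_finite]] unfolding supp_list_def by auto

lemma finsum_D_eq: "finite I \<Longrightarrow> (\<And>i. i \<in> I \<Longrightarrow> f i \<in> A) \<Longrightarrow> finsum D f I = finsum T f I"
proof (induction I rule: finite_induct)
  case (insert a I)
  have "finsum D f (insert a I) = f a \<oplus>\<^bsub>D\<^esub> finsum D f I"
    by (rule DT.finsum_insert) (use insert in auto)
  also have "\<dots> = finsum T f (insert a I)"
    using insert A_carrier by (simp add: finsum_insert)
  finally show ?case .
qed simp

text \<open>The coefficients of \<open>d b\<close> in the dual basis expansion; irreducibility puts them in \<open>k\<close>.\<close>

definition dcoeff :: "'b \<Rightarrow> 'b \<Rightarrow> 'b \<Rightarrow> 'b" where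
  "dcoeff d b b' = E' (gam b' \<otimes> (d \<otimes> b))"

lemma dcoeff_in_SD: "d \<in> A \<Longrightarrow> b \<in> supp \<Longrightarrow> b' \<in> supp \<Longrightarrow> dcoeff d b b' \<in> SD"
  unfolding dcoeff_def SD_eq using E'_centralizer_scalars A_mult gam_in_A supp_in_A by simp

lemma dcoeff_in_A: "d \<in> A \<Longrightarrow> b \<in> supp \<Longrightarrow> b' \<in> supp \<Longrightarrow> dcoeff d b b' \<in> A"
  using dcoeff_in_SD SD_subset_A by auto

lemma teq_lmult_dual_basis:
  assumes d: "d \<in> A"
  shows "DT.teq (map (\<lambda>b. (d \<otimes> b, gam b)) supp_list)
                (concat (map (\<lambda>b. map (\<lambda>b'. (b', dcoeff d b b' \<otimes> gam b)) supp_list) supp_list))"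
proof -
  have "DT.teq [(d \<otimes> b, gam b)] (map (\<lambda>b'. (b', dcoeff d b b' \<otimes> gam b)) supp_list)" if b: "b \<in> supp" for b
  proof -
    have "d \<otimes> b = (\<Oplus>b'\<in>supp. b' \<otimes> dcoeff d b b')"
      unfolding dcoeff_def using dual_basis_expand_left d b A_carrier supp_carrier by simp
    also have "\<dots> = finsum D (\<lambda>b'. b' \<otimes>\<^bsub>D\<^esub> dcoeff d b b') (set supp_list)"
      using finsum_D_eq[OF supp_finite] A_mult supp_in_A dcoeff_in_A d b supp_list by simp
    finally have "DT.teq [(d \<otimes> b, gam b)] (map (\<lambda>b'. (b' \<otimes>\<^bsub>D\<^esub> dcoeff d b b', gam b)) supp_list)"
      using DT.teq_finsum_left[OF supp_list(2)] supp_list A_mult supp_in_A dcoeff_in_A d b gam_in_A by simp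
    also have "DT.teq (map (\<lambda>b'. (b' \<otimes>\<^bsub>D\<^esub> dcoeff d b b', gam b)) supp_list) (map (\<lambda>b'. (b', dcoeff d b b' \<otimes>\<^bsub>D\<^esub> gam b)) supp_list)"
    proof (rule DT.teq_map)
      fix b' assume "b' \<in> set supp_list"
      then show "DT.teq [(b' \<otimes>\<^bsub>D\<^esub> dcoeff d b b', gam b)] [(b', dcoeff d b b' \<otimes>\<^bsub>D\<^esub> gam b)]"
        using tens_eq.bal[of b' D "gam b" "dcoeff d b b'" SD] supp_list supp_in_A d b gam_in_A dcoeff_in_SD by simp
    qed
    finally show ?thesis by simp
  qed
  then show ?thesis using DT.teq_concat_map[of supp_list "\<lambda>b. [(d \<otimes> b, gam b)]"] supp_list by simp
qed

lemma teq_dual_basis_rmult: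
  assumes d: "d \<in> A"
  shows "DT.teq (concat (map (\<lambda>b'. map (\<lambda>b. (b', dcoeff d b b' \<otimes> gam b)) supp_list) supp_list))
                (map (\<lambda>b'. (b', gam b' \<otimes> d)) supp_list)"
proof -
  have "DT.teq (map (\<lambda>b. (b', dcoeff d b b' \<otimes> gam b)) supp_list) [(b', gam b' \<otimes> d)]" if b': "b' \<in> supp" for b'
  proof -
    have "gam b' \<otimes> d = (\<Oplus>b\<in>supp. E' (gam b' \<otimes> d \<otimes> b) \<otimes> gam b)"
      using dual_basis_expand_right[of "gam b' \<otimes> d"] gam_closed d b' A_carrier by simp
    also have "\<dots> = (\<Oplus>b\<in>supp. dcoeff d b b' \<otimes> gam b)"
      unfolding dcoeff_def
      by (rule finsum_cong') (use gam_closed d b' A_carrier supp_carrier E_closed in \<open>auto simp: m_assoc\<close>)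
    also have "\<dots> = finsum D (\<lambda>b. dcoeff d b b' \<otimes>\<^bsub>D\<^esub> gam b) (set supp_list)"
      using finsum_D_eq[OF supp_finite] A_mult dcoeff_in_A gam_in_A d b' supp_list by simp
    finally have eq: "gam b' \<otimes> d = finsum D (\<lambda>b. dcoeff d b b' \<otimes>\<^bsub>D\<^esub> gam b) (set supp_list)" .
    have "DT.teq [(b', finsum D (\<lambda>b. dcoeff d b b' \<otimes>\<^bsub>D\<^esub> gam b) (set supp_list))]
                  (map (\<lambda>b. (b', dcoeff d b b' \<otimes>\<^bsub>D\<^esub> gam b)) supp_list)"
      by (rule DT.teq_finsum_right) (use supp_list A_mult supp_in_A dcoeff_in_A d b' gam_in_A in auto)
    then show ?thesis using eq tens_eq.sym by simp
  qed
  then show ?thesis using DT.teq_concat_map[of supp_list _ "\<lambda>b'. [(b', gam b' \<otimes> d)]"] supp_list by simp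
qed

text \<open>This is \<open>d e = e d\<close> for \<open>e = \<Sum>\<^sub>b b \<otimes> \<gamma>\<^sub>b\<close> in \<open>A \<otimes>\<^sub>k A\<close>.\<close>

lemma casimir_comm:
  assumes d: "d \<in> A"
  shows "DT.teq (map (\<lambda>b. (d \<otimes> b, gam b)) supp_list) (map (\<lambda>b. (b, gam b \<otimes> d)) supp_list)"
proof -
  note teq_lmult_dual_basis[OF d]
  also have "DT.teq (concat (map (\<lambda>b. map (\<lambda>b'. (b', dcoeff d b b' \<otimes> gam b)) supp_list) supp_list))
                    (concat (map (\<lambda>b'. map (\<lambda>b. (b', dcoeff d b b' \<otimes> gam b)) supp_list) supp_list))"
    by (rule DT.teq_concat_transpose) (use teq_lmult_dual_basis[OF d] DT.teq_carrier_pairs in blast)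
  also note teq_dual_basis_rmult[OF d]
  finally show ?thesis .
qed

definition lam_one :: 'b where
  "lam_one = lam \<odot> \<one>"

lemma lam_one_in_A: "lam_one \<in> A"
proof -
  have "lam_one \<in> scalars K T" using lamK unfolding lam_one_def scalars_def by blast
  then show ?thesis using SD_subset_A SD_eq by auto
qed

lemma lam_one_closed: "lam_one \<in> carrier T"
  using lam_one_in_A A_carrier by simp

lemma lam_one_comm: "y \<in> carrier T \<Longrightarrow> lam_one \<otimes> y = y \<otimes> lam_one"
proof -
  have "lam_one \<in> scalars K T" using lamK unfolding lam_one_def scalars_def by blast
  then have "lam_one \<in> centralizer T (carrier T)" using scalars_subset_centralizer[OF algebra_T] by blast
  then show "y \<in> carrier T \<Longrightarrow> lam_one \<otimes> y = y \<otimes> lam_one" unfolding centralizer_def by blast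
qed

lemma lam_cancel: "x \<in> carrier T \<Longrightarrow> lam \<odot> (inv\<^bsub>K\<^esub> lam \<odot> x) = x"
proof -
  assume x: "x \<in> carrier T"
  have "lam \<in> Units K" using KF.field_Units lamK lam0 by auto
  then have "lam \<otimes>\<^bsub>K\<^esub> inv\<^bsub>K\<^esub> lam = \<one>\<^bsub>K\<^esub>" "inv\<^bsub>K\<^esub> lam \<in> carrier K" by simp_all
  then show ?thesis using Tmod.smult_assoc1[OF lamK _ x, of "inv\<^bsub>K\<^esub> lam"] x by simp
qed

text \<open>The factor \<open>\<lambda>\<close> compensates \<open>\<Sum>\<^sub>b b \<gamma>\<^sub>b = \<lambda>\<inverse>\<close>.\<close>

definition sig :: "'b \<Rightarrow> ('b \<times> 'b) list set" where
  "sig d = tcls D SD (map (\<lambda>b. (d \<otimes> b, gam b \<otimes> lam_one)) supp_list)"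

lemma carrier_pairs_sig_list: "d \<in> A \<Longrightarrow> DT.carrier_pairs (map (\<lambda>b. (d \<otimes> b, gam b \<otimes> lam_one)) supp_list)"
  using A_mult supp_in_A gam_in_A lam_one_in_A supp_list by (auto simp: DT.carrier_pairs_def)

lemma sig_tmultmap: "d \<in> A \<Longrightarrow> tmultmap D (sig d) = d"
proof -
  assume d: "d \<in> A"
  have dc: "d \<in> carrier T" using A_carrier d .
  have ilK: "inv\<^bsub>K\<^esub> lam \<in> carrier K" using KF.field_Units lamK lam0 by auto
  have "tmultmap D (sig d) = finsum D (\<lambda>b. (d \<otimes> b) \<otimes> (gam b \<otimes> lam_one)) (set supp_list)"
    unfolding sig_def DT.tmultmap_tclass[OF carrier_pairs_sig_list[OF d]]
    using DT.lmultsum_map_finsum[OF supp_list(2)] A_mult supp_in_A gam_in_A lam_one_in_A d supp_list by simp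
  also have "\<dots> = (\<Oplus>b\<in>supp. (d \<otimes> b) \<otimes> (gam b \<otimes> lam_one))"
    using finsum_D_eq[OF supp_finite] A_mult supp_in_A gam_in_A lam_one_in_A d supp_list by simp
  also have "\<dots> = (\<Oplus>b\<in>supp. d \<otimes> (b \<otimes> gam b) \<otimes> lam_one)"
    by (rule finsum_cong') (use dc supp_carrier gam_closed lam_one_closed in \<open>auto simp: m_assoc\<close>)
  also have "\<dots> = (\<Oplus>b\<in>supp. d \<otimes> (b \<otimes> gam b)) \<otimes> lam_one"
    by (rule finsum_ldistr[symmetric]) (use supp_finite dc supp_carrier gam_closed lam_one_closed in auto)
  also have "(\<Oplus>b\<in>supp. d \<otimes> (b \<otimes> gam b)) = d \<otimes> (\<Oplus>b\<in>supp. b \<otimes> gam b)"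
    by (rule finsum_rdistr[symmetric]) (use supp_finite dc supp_carrier gam_closed in auto)
  also have "\<dots> = inv\<^bsub>K\<^esub> lam \<odot> d"
    unfolding sum_supp_gam using smult_mult_T[OF ilK dc one_closed] dc by simp
  also have "(inv\<^bsub>K\<^esub> lam \<odot> d) \<otimes> lam_one = lam \<odot> (inv\<^bsub>K\<^esub> lam \<odot> d)"
    unfolding lam_one_def using smult_mult_T[OF lamK _ one_closed, of "inv\<^bsub>K\<^esub> lam \<odot> d"] ilK dc by simp
  also have "\<dots> = d" by (rule lam_cancel[OF dc])
  finally show ?thesis .
qed

lemma sig_add: "d \<in> A \<Longrightarrow> x \<in> A \<Longrightarrow> sig (d \<oplus> x) = tadd D SD (sig d) (sig x)"
proof -
  assume d: "d \<in> A" and x: "x \<in> A"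
  have "DT.teq (map (\<lambda>b. ((d \<oplus> x) \<otimes> b, gam b \<otimes> lam_one)) supp_list)
           (map (\<lambda>b. (d \<otimes> b, gam b \<otimes> lam_one)) supp_list @ map (\<lambda>b. (x \<otimes> b, gam b \<otimes> lam_one)) supp_list)"
  proof (rule DT.teq_map_split)
    fix b assume "b \<in> set supp_list"
    then have b: "b \<in> supp" using supp_list by simp
    have "DT.teq [(d \<otimes> b \<oplus>\<^bsub>D\<^esub> x \<otimes> b, gam b \<otimes> lam_one)] [(d \<otimes> b, gam b \<otimes> lam_one), (x \<otimes> b, gam b \<otimes> lam_one)]"
      by (rule tens_eq.addl) (use d x b A_mult supp_in_A gam_in_A lam_one_in_A in auto)
    then show "DT.teq [((d \<oplus> x) \<otimes> b, gam b \<otimes> lam_one)] [(d \<otimes> b, gam b \<otimes> lam_one), (x \<otimes> b, gam b \<otimes> lam_one)]"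
      using d x b A_carrier supp_carrier by (simp add: l_distr)
  qed
  then show ?thesis
    unfolding sig_def DT.tadd_tclass[OF carrier_pairs_sig_list[OF d] carrier_pairs_sig_list[OF x]] by (rule DT.tclass_eq)
qed

lemma sig_lmult: "d \<in> A \<Longrightarrow> x \<in> A \<Longrightarrow> sig (d \<otimes> x) = tlact D SD d (sig x)"
proof -
  assume d: "d \<in> A" and x: "x \<in> A"
  have "tlact D SD d (sig x) = DT.tclass (map (\<lambda>(a, b). (d \<otimes>\<^bsub>D\<^esub> a, b)) (map (\<lambda>b. (x \<otimes> b, gam b \<otimes> lam_one)) supp_list))"
    unfolding sig_def by (rule DT.tlact_tclass[OF carrier_pairs_sig_list[OF x]]) (use d in simp)
  also have "map (\<lambda>(a, b). (d \<otimes>\<^bsub>D\<^esub> a, b)) (map (\<lambda>b. (x \<otimes> b, gam b \<otimes> lam_one)) supp_list)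
      = map (\<lambda>b. ((d \<otimes> x) \<otimes> b, gam b \<otimes> lam_one)) supp_list"
    using d x A_carrier supp_carrier supp_list by (auto simp: m_assoc)
  finally show ?thesis unfolding sig_def by simp
qed

lemma sig_rmult: "d \<in> A \<Longrightarrow> x \<in> A \<Longrightarrow> sig (x \<otimes> d) = tract D SD (sig x) d"
proof -
  assume d: "d \<in> A" and x: "x \<in> A"
  have dc: "d \<in> carrier T" and xc: "x \<in> carrier T" using d x A_carrier by auto
  let ?lr = "\<lambda>xs. map (\<lambda>(a, b). (a, b \<otimes>\<^bsub>D\<^esub> lam_one)) (map (\<lambda>(a, b). (x \<otimes>\<^bsub>D\<^esub> a, b)) xs)"
  have "tract D SD (sig x) d = DT.tclass (map (\<lambda>(a, b). (a, b \<otimes>\<^bsub>D\<^esub> d)) (map (\<lambda>b. (x \<otimes> b, gam b \<otimes> lam_one)) supp_list))"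
    unfolding sig_def by (rule DT.tract_tclass[OF carrier_pairs_sig_list[OF x]]) (use d in simp)
  also have "map (\<lambda>(a, b). (a, b \<otimes>\<^bsub>D\<^esub> d)) (map (\<lambda>b. (x \<otimes> b, gam b \<otimes> lam_one)) supp_list)
      = ?lr (map (\<lambda>b. (b, gam b \<otimes> d)) supp_list)"
  proof -
    have "\<And>b. b \<in> supp \<Longrightarrow> gam b \<otimes> lam_one \<otimes> d = gam b \<otimes> d \<otimes> lam_one"
      using gam_closed lam_one_closed dc lam_one_comm[OF dc] by (simp add: m_assoc)
    then show ?thesis using supp_list by auto
  qed
  also have "DT.tclass \<dots> = DT.tclass (?lr (map (\<lambda>b. (d \<otimes> b, gam b)) supp_list))"
    by (rule DT.tclass_eq[OF tens_eq.sym[OF DT.teq_rmult[OF DT.teq_lmult[OF casimir_comm[OF d]]]]])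
      (use x lam_one_in_A in simp_all)
  also have "?lr (map (\<lambda>b. (d \<otimes> b, gam b)) supp_list) = map (\<lambda>b. ((x \<otimes> d) \<otimes> b, gam b \<otimes> lam_one)) supp_list"
    using xc dc supp_carrier supp_list by (auto simp: m_assoc)
  finally show ?thesis unfolding sig_def by simp
qed

theorem centralizer_separable: "separable_algebra K D"
  unfolding separable_algebra_def
proof (intro conjI exI[of _ sig] ballI)
  show "k_algebra K D" by (rule k_algebra_D)
next
  fix d assume "d \<in> carrier D"
  then show "sig d \<in> tens_carrier D SD" "tmultmap D (sig d) = d"
    unfolding sig_def using DT.tclass_in_tens_carrier carrier_pairs_sig_list sig_tmultmap[unfolded sig_def] by simp_all
next
  fix d x assume "d \<in> carrier D" "x \<in> carrier D"
  then show "sig (d \<oplus>\<^bsub>D\<^esub> x) = tadd D SD (sig d) (sig x)" "sig (d \<otimes>\<^bsub>D\<^esub> x) = tlact D SD d (sig x)"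
    "sig (x \<otimes>\<^bsub>D\<^esub> d) = tract D SD (sig x) d"
    using sig_add sig_lmult sig_rmult by simp_all
qed

end

lemma (in strongly_separable_ext) separable_centralizer_R1:
  assumes "free_right_with_basis_in R1 (incl ` carrier R) (centralizer R1 (incl ` S))"
  shows "separable_algebra K (R1\<lparr>carrier := centralizer R1 (incl ` S)\<rparr>)"
proof -
  have "subring (incl ` carrier R) R1" using R1_subalgebra unfolding k_subalgebra_def by auto
  moreover have "incl ` S \<subseteq> incl ` carrier R" using S_subset by auto
  ultimately interpret depth_two_ext K R1 "incl ` carrier R" "incl ` S" E1 x1 y1 n lam
    using field_K R1_k_algebra E1_bimodule R1_quasi_basis lamK lam0 R1_sum_x1_y1 E1_centralizer_scalars assms
    by (intro depth_two_ext.intro)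
  show ?thesis by (rule centralizer_separable)
qed

theorem proposition3p2:
  fixes K :: "'k ring" and M :: "('k,'a) module" and N :: "'a set"
    and E :: "'a \<Rightarrow> 'a" and x y :: "nat \<Rightarrow> 'a" and n :: nat and lam :: 'k
  assumes "field K"
    and "k_algebra K M"
    and "k_subalgebra K N M"
    and irreducible: "centralizer M N = scalars K M"
    and "bimodule_map M N E"
    and "quasi_basis M E x y n"
    and "E \<one>\<^bsub>M\<^esub> = \<one>\<^bsub>M\<^esub>"
    and "lam \<in> carrier K" and "lam \<noteq> \<zero>\<^bsub>K\<^esub>"
    and "(\<Oplus>\<^bsub>M\<^esub>i\<in>{..<n}. x i \<otimes>\<^bsub>M\<^esub> y i) = (inv\<^bsub>K\<^esub> lam) \<odot>\<^bsub>M\<^esub> \<one>\<^bsub>M\<^esub>"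
  defines "M1 \<equiv> bc M N E x y n"
    and "iM \<equiv> bc_incl M N x y n"
    and "EM \<equiv> bc_E M lam"
    and "x1 \<equiv> bc_x K M N x lam"
    and "y1 \<equiv> bc_y M N y"
  defines "M2 \<equiv> bc M1 (iM ` carrier M) (\<lambda>X. iM (EM X)) x1 y1 n"
    and "iM1 \<equiv> bc_incl M1 (iM ` carrier M) x1 y1 n"
  defines "A \<equiv> centralizer M1 (iM ` N)"
    and "B \<equiv> centralizer M2 (iM1 ` iM ` carrier M)"
  assumes depth2_1: "free_right_with_basis_in M1 (iM ` carrier M) A"
    and depth2_2: "free_right_with_basis_in M2 (iM1 ` carrier M1) B"
  shows "separable_algebra K (M1\<lparr>carrier := A\<rparr>) \<and> separable_algebra K (M2\<lparr>carrier := B\<rparr>)"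
proof -
  have M: "strongly_separable_ext K M N E x y n lam"
    by (rule strongly_separable_ext.intro) (use assms in auto)
  then have M1: "strongly_separable_ext K M1 (iM ` carrier M) (\<lambda>X. iM (EM X)) x1 y1 n lam"
    unfolding M1_def iM_def EM_def x1_def y1_def by (rule strongly_separable_ext.R1_strongly_separable_ext)
  show ?thesis
    using strongly_separable_ext.separable_centralizer_R1[OF M] depth2_1
      strongly_separable_ext.separable_centralizer_R1[OF M1] depth2_2
    unfolding A_def B_def M1_def M2_def iM_def iM1_def by simp
qed

end
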